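(* Assume $\{f_t\}_t$ is Newton-admissible. Let $I=\{1,\ldots,n_I\}$ with $1\le n_I<n$, $J=\{1,\ldots,n\}$, and $L=\{1,\ldots,k_L\}\subseteq K\subseteq K_0$. Let $(\tau,\mathbf{q})\in S^I(K)\cap\overline{S^J(L)}$, sufficiently close to the origin, and let $\rho(s)=(t(s),\mathbf{z}(s))$ be a real analytic path (in a real variable $s$) with $\rho(0)=(\tau,\mathbf{q})$ and $\rho(s)\in S^J(L)$ for $s\ne0$. Write $z_i(s)=a_is^{w_i}+(\text{higher order terms})$ with $a_i\ne0$, so that $w_i=0$, $a_i=q_i$ for $i\le n_I$ and $w_i>0$ for $i>n_I$; put $\mathbf{w}=(w_1,\ldots,w_n)$ and $w_{\min}:=\min\{w_i: n_I<i\le n\}$. Let $L':=\{k\in L: I\in\mathcal{V}_{f^k_t}\}$, assume $L'=\{1,\ldots,k_{L'}\}$, and assume $d(\mathbf{w};f^k_t)=d$ for all $k\in L'$ and all small $t$ (for some common value $d$). Then, after renumbering $f^1,\ldots,f^{k_{L'}}$ if necessary, there exist polynomials $c_{k,l}(s)$, $1\le l<k\le k_{L'}$, such that, writing $$df^k(\rho(s))+\sum_{l=1}^{k-1}c_{k,l}(s)\,df^l(\rho(s))=\omega_k s^{\nu_k}+(\text{higher order terms in } s),\quad \omega_k\ne0,$$ the covectors $\omega_1,\ldots,\omega_{k_{L'}}\in T^*_{(\tau,\mathbf{q})}(\mathbb{C}\times\mathbb{C}^n)$ are linearly independent and $\nu_1\le\cdots\le\nu_{k_{L'}}\le d-w_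{\min}$.
   Context: Let $(t,\mathbf{z})=(t,z_1,\ldots,z_n)$ be coordinates on $\mathbb{C}\times\mathbb{C}^n$. For $k\in K_0:=\{1,\ldots,k_0\}$ let $f^k\colon\mathbb{C}\times\mathbb{C}^n\to\mathbb{C}$ be a non-constant polynomial with $f^k(t,\mathbf{0})=0$ for all $t$; put $f:=f^1\cdots f^{k_0}$, $f_t(\mathbf{z}):=f(t,\mathbf{z})$, $f^k_t(\mathbf{z}):=f^k(t,\mathbf{z})$. Here $df^k=\frac{\partial f^k}{\partial t}dt+\sum_i\frac{\partial f^k}{\partial z_i}dz_i$, and $df^k(\rho(s))$ is expanded as a (vector-valued) power series in $s$. Newton data: for a polynomial $g(\mathbf{z})=\sum_\alpha c_\alpha\mathbf{z}^\alpha$ with $g(\mathbf{0})=0$, $\Gamma_+(g)$ is the convex hull in $\mathbb{R}^n_+$ of $\bigcup_{c_\alpha\neq0}(\alpha+\mathbb{R}^n_+)$, and the Newton boundary $\Gamma(g)$ is the union of its compact faces. For a weight vector $\mathbf{w}=(w_1,\ldots,w_n)\in\mathbb{N}^n\setminus\{\mathbf{0}\}$ (nonnegative integers), $d(\mathbf{w};g):=\min\{\sum_i w_ix_i : x\in\Gamma_+(g)\}$, $\Delta(\mathbf{w};g)$ is the face of $\Gamma_+(g)$ where this minimum is attained, $g_{\mathbf{w}}:=\sum_{\alpha\in\Delta(\mathbf{w};g)}c_\alpha\mathbf{z}^\alpha$ is the face function, and $I(\mathbf{w}):=\{i: w_i=0\}$. $\mathbf w$ is positive if all $w_i>0$. For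 $I\subseteq\{1,\ldots,n\}$, $\mathbb{C}^I:=\{\mathbf{z}: z_i=0 \text{ for } i\notin I\}$ and $\mathbb{C}^{*I}:=\{\mathbf{z}: z_i=0\iff i\notin I\}$; $\mathbb{C}^{*n}=\mathbb{C}^{*\{1,\ldots,n\}}$. $\mathcal{V}_g$ is the set of $I$ with $g|_{\mathbb{C}^I}\equiv0$. For $i_1,\ldots,i_m$ and $u_{i_j}\in\mathbb{C}^*$, $\mathbb{C}^{*n}(u_{i_1},\ldots,u_{i_m}):=\{\mathbf{z}\in\mathbb{C}^{*n}: z_{i_j}=u_{i_j},\ 1\le j\le m\}$. Non-degenerate complete intersection: polynomials $g^1,\ldots,g^p$ vanishing at $\mathbf 0$ define a non-degenerate complete intersection germ $V(g^1,\ldots,g^p)$ if for every positive weight vector $\mathbf{w}$, the $p$-form $dg^1_{\mathbf{w}}\wedge\cdots\wedge dg^p_{\mathbf{w}}$ is nowhere zero on $V^*(g^1_{\mathbf{w}},\ldots,g^p_{\mathbf{w}}):=\{\mathbf{z}\in\mathbb{C}^{*n}: g^1_{\mathbf{w}}(\mathbf{z})=\cdots=g^p_{\mathbf{w}}(\mathbf{z})=0\}$. Local tameness: $R>0$ is a radius of local tameness of $\{g^1,\ldots,g^p\}$ if for every nonempty $I=\{i_1,\ldots,i_m\}\in\mathcal{V}_{g^1}\cap\cdots\cap\mathcal{V}_{g^p}$, every $\mathbf{w}\in\mathbb{N}^n\setminus\{\mathbf 0\}$ with $I(\mathbf{w})=I$ and every $u_{i_1},\ldots,u_{i_m}\in\mathbb{C}^*$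 with $\sum_j|u_{i_j}|^2<R$, the set $V^*(g^1_{\mathbf{w}},\ldots,g^p_{\mathbf{w}})\cap\mathbb{C}^{*n}(u_{i_1},\ldots,u_{i_m})$ is a reduced non-singular complete intersection in $\mathbb{C}^{*n}(u_{i_1},\ldots,u_{i_m})$, i.e. the differentials of $g^1_{\mathbf{w}},\ldots,g^p_{\mathbf{w}}$ with respect to the variables $(z_i)_{i\notin I}$ are linearly independent at each of its points; the germ is locally tame if such $R$ exists. Newton-admissible: $\{f_t\}_t$ is Newton-admissible if there is $R>0$ such that for all sufficiently small $t$: (i) for each $k\in K_0$, $\Gamma(f^k_t)$ is independent of $t$; (ii) for every nonempty $\{k_1,\ldots,k_p\}\subseteq K_0$, $V(f^{k_1}_t,\ldots,f^{k_p}_t)$ is a non-degenerate, locally tame complete intersection germ having a radius of local tameness greater than $R$ ($R$ independent of $t$ and of the subset). Canonical toric stratification: $\mathcal{S}$ is the collection of nonempty sets $S^I(K):=\{(t,\mathbf{z})\in\mathbb{C}\times\mathbb{C}^{*I}: f^k(t,\mathbf{z})=0\iff k\in K\}$ for $I\subseteq\{1,\ldots,n\}$, $K\subseteq K_0$ (near the origin these are non-singular, and $S^{\emptyset}(K_0)=\mathbb{C}\times\{\mathbf 0\}$); $\overline{S}$ denotes closure. *)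

theory Defs
  imports "HOL-Analysis.Analysis" "HOL-Computational_Algebra.Polynomial"
begin

text \<open>A polynomial in the variables x_0 = t, x_1 = z_1, ..., x_n = z_n with complex
  coefficients is represented by its coefficient function on exponent vectors
  alpha :: nat => nat (alpha 0 = exponent of t, alpha i = exponent of z_i).\<close>
type_synonym cpoly = "(nat \<Rightarrow> nat) \<Rightarrow> complex"

definition supp :: "cpoly \<Rightarrow> (nat \<Rightarrow> nat) set" where
  "supp c = {\<alpha>. c \<alpha> \<noteq> 0}"

definition is_poly :: "nat \<Rightarrow> cpoly \<Rightarrow> bool" where
  "is_poly n c \<longleftrightarrow> finite (supp c) \<and> (\<forall>\<alpha>\<in>supp c. \<forall>j>n. \<alpha> j = 0)"

definition peval :: "nat \<Rightarrow> cpoly \<Rightarrow> (nat \<Rightarrow> complex) \<Rightarrow> complex" where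
  "peval n c x = (\<Sum>\<alpha>\<in>supp c. c \<alpha> * (\<Prod>j\<in>{0..n}. x j ^ \<alpha> j))"

definition pderivv :: "nat \<Rightarrow> cpoly \<Rightarrow> cpoly" where
  "pderivv j c = (\<lambda>\<alpha>. of_nat (\<alpha> j + 1) * c (\<alpha>(j := \<alpha> j + 1)))"

text \<open>f_t: the polynomial in z obtained by fixing t (exponent vectors with alpha 0 = 0).\<close>
definition slice :: "cpoly \<Rightarrow> complex \<Rightarrow> cpoly" where
  "slice c t = (\<lambda>\<beta>. if \<beta> 0 = 0
      then (\<Sum>\<alpha>\<in>{\<alpha>. c \<alpha> \<noteq> 0 \<and> \<alpha>(0 := 0) = \<beta>}. c \<alpha> * t ^ \<alpha> 0) else 0)"

definition wdot :: "nat \<Rightarrow> (nat \<Rightarrow> real) \<Rightarrow> (nat \<Rightarrow> real) \<Rightarrow> real" where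
  "wdot n w x = (\<Sum>i\<in>{1..n}. w i * x i)"

text \<open>Gamma_+(g) in R^n_+ (points are nat => real vanishing outside 1..n):
  convex hull of the union of alpha + R^n_+ over the support, i.e. conv(supp) + R^n_+.\<close>
definition newton_plus :: "nat \<Rightarrow> cpoly \<Rightarrow> (nat \<Rightarrow> real) set" where
  "newton_plus n g = {x. (\<forall>i. i \<notin> {1..n} \<longrightarrow> x i = 0) \<and>
     (\<exists>\<mu>::(nat \<Rightarrow> nat) \<Rightarrow> real. (\<forall>\<alpha>\<in>supp g. \<mu> \<alpha> \<ge> 0) \<and> sum \<mu> (supp g) = 1 \<and>
        (\<forall>i\<in>{1..n}. x i \<ge> (\<Sum>\<alpha>\<in>supp g. \<mu> \<alpha> * real (\<alpha> i))))}"

text \<open>Newton boundary: union of the compact faces of Gamma_+, i.e. the faces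
  cut out by strictly positive (real) weight vectors.\<close>
definition newton_boundary :: "nat \<Rightarrow> cpoly \<Rightarrow> (nat \<Rightarrow> real) set" where
  "newton_boundary n g = \<Union>{{x \<in> newton_plus n g. \<forall>y\<in>newton_plus n g. wdot n w x \<le> wdot n w y}
        | w. \<forall>i\<in>{1..n}. w i > 0}"

definition rvec :: "nat \<Rightarrow> (nat \<Rightarrow> nat) \<Rightarrow> (nat \<Rightarrow> real)" where
  "rvec n \<alpha> = (\<lambda>i. if i \<in> {1..n} then real (\<alpha> i) else 0)"

definition dW :: "nat \<Rightarrow> (nat \<Rightarrow> nat) \<Rightarrow> cpoly \<Rightarrow> real" where
  "dW n w g = Inf {wdot n (\<lambda>i. real (w i)) x | x. x \<in> newton_plus n g}"

definition Delta :: "nat \<Rightarrow> (nat \<Rightarrow> nat) \<Rightarrow> cpoly \<Rightarrow> (nat \<Rightarrow> real) set" where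
  "Delta n w g = {x \<in> newton_plus n g. wdot n (\<lambda>i. real (w i)) x = dW n w g}"

definition facef :: "nat \<Rightarrow> (nat \<Rightarrow> nat) \<Rightarrow> cpoly \<Rightarrow> cpoly" where
  "facef n w g = (\<lambda>\<alpha>. if rvec n \<alpha> \<in> Delta n w g then g \<alpha> else 0)"

definition Cstar :: "nat set \<Rightarrow> (nat \<Rightarrow> complex) set" where
  "Cstar I = {z. \<forall>i. z i = 0 \<longleftrightarrow> i \<notin> I}"

definition Vset :: "nat \<Rightarrow> cpoly \<Rightarrow> nat set set" where
  "Vset n g = {I. I \<subseteq> {1..n} \<and> (\<forall>z. (\<forall>i. i \<notin> I \<longrightarrow> z i = 0) \<longrightarrow> peval n g z = 0)}"

definition cindep :: "nat set \<Rightarrow> nat set \<Rightarrow> (nat \<Rightarrow> nat \<Rightarrow> complex) \<Rightarrow> bool" where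
  "cindep P A v \<longleftrightarrow> (\<forall>a::nat \<Rightarrow> complex.
      (\<forall>i\<in>A. (\<Sum>k\<in>P. a k * v k i) = 0) \<longrightarrow> (\<forall>k\<in>P. a k = 0))"

definition nondeg :: "nat \<Rightarrow> nat set \<Rightarrow> (nat \<Rightarrow> cpoly) \<Rightarrow> bool" where
  "nondeg n P g \<longleftrightarrow> (\<forall>w::nat \<Rightarrow> nat. (\<forall>i\<in>{1..n}. w i > 0) \<longrightarrow>
     (\<forall>z\<in>Cstar {1..n}. (\<forall>k\<in>P. peval n (facef n w (g k)) z = 0) \<longrightarrow>
        cindep P {1..n} (\<lambda>k i. peval n (pderivv i (facef n w (g k))) z)))"

definition tame_radius :: "nat \<Rightarrow> nat set \<Rightarrow> (nat \<Rightarrow> cpoly) \<Rightarrow> real \<Rightarrow> bool" where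
  "tame_radius n P g R \<longleftrightarrow> R > 0 \<and> (\<forall>I. I \<noteq> {} \<longrightarrow> (\<forall>k\<in>P. I \<in> Vset n (g k)) \<longrightarrow>
     (\<forall>w::nat \<Rightarrow> nat. (\<exists>i\<in>{1..n}. w i \<noteq> 0) \<longrightarrow> {i\<in>{1..n}. w i = 0} = I \<longrightarrow>
       (\<forall>u::nat \<Rightarrow> complex. (\<forall>i\<in>I. u i \<noteq> 0) \<longrightarrow> (\<Sum>i\<in>I. (cmod (u i))\<^sup>2) < R \<longrightarrow>
         (\<forall>z\<in>Cstar {1..n}. (\<forall>i\<in>I. z i = u i) \<longrightarrow> (\<forall>k\<in>P. peval n (facef n w (g k)) z = 0) \<longrightarrow>
            cindep P ({1..n} - I) (\<lambda>k i. peval n (pderivv i (facef n w (g k))) z)))))"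

definition newton_admissible :: "nat \<Rightarrow> nat \<Rightarrow> (nat \<Rightarrow> cpoly) \<Rightarrow> bool" where
  "newton_admissible n k0 f \<longleftrightarrow> (\<exists>R>0. \<exists>\<epsilon>>0. \<forall>t t'. cmod t < \<epsilon> \<longrightarrow> cmod t' < \<epsilon> \<longrightarrow>
     (\<forall>k\<in>{1..k0}. newton_boundary n (slice (f k) t) = newton_boundary n (slice (f k) t')) \<and>
     (\<forall>P. P \<noteq> {} \<longrightarrow> P \<subseteq> {1..k0} \<longrightarrow>
        nondeg n P (\<lambda>k. slice (f k) t) \<and> (\<exists>R'>R. tame_radius n P (\<lambda>k. slice (f k) t) R')))"

definition stratum :: "nat \<Rightarrow> nat \<Rightarrow> (nat \<Rightarrow> cpoly) \<Rightarrow> nat set \<Rightarrow> nat set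
     \<Rightarrow> (complex \<times> (nat \<Rightarrow> complex)) set" where
  "stratum n k0 f I K = {(t, z). z \<in> Cstar I \<and>
      (\<forall>k\<in>{1..k0}. peval n (f k) (z(0 := t)) = 0 \<longleftrightarrow> k \<in> K)}"

definition has_ps :: "real \<Rightarrow> (nat \<Rightarrow> complex) \<Rightarrow> (real \<Rightarrow> complex) \<Rightarrow> bool" where
  "has_ps \<epsilon> a g \<longleftrightarrow> (\<forall>s. \<bar>s\<bar> < \<epsilon> \<longrightarrow> (\<lambda>m. a m * (complex_of_real s) ^ m) sums g s)"

end

theory Submission
  imports Defs "HOL-Complex_Analysis.Complex_Analysis"
begin

text \<open>Along the path, every partial derivative of f^k is a power series in s. Substituting
  z_i = a_i s^{w_i} + ... into a monomial of weighted degree at least d (Newton-admissibility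
  keeps d(w; f_t) constant in t, so f^k has no monomial of smaller weight) shows that
  \<partial>f^k/\<partial>z_i vanishes to order d - w_i, with the corresponding derivative of the face function
  f^k_w at a as leading coefficient; the same expansion of f^k itself, which vanishes along
  the path, gives f^k_w(a) = 0. Local tameness makes these face gradients independent in the
  directions z_i with w_i > 0, so every combination of the df^k with polynomial coefficients
  that do not all vanish at s = 0 has a nonzero coefficient of order at most d - w_min.
  Gaussian elimination over C[s], which repeatedly adjoins the remaining df^k whose best
  reduction against those already chosen has the smallest order, then produces the triangular
  combinations with independent leading covectors and nondecreasing orders.\<close>

section \<open>Power series on a real interval\<close>

lemma norm_of_real_less_fps_conv_radius:
  "\<bar>s\<bar> < \<epsilon> \<Longrightarrow> ereal \<epsilon> \<le> fps_conv_radius F \<Longrightarrow> ereal (norm (complex_of_real s)) < fps_conv_radius F"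
  by (auto elim!: order.strict_trans2[rotated])

lemma has_ps_iff_eval_fps:
  "has_ps \<epsilon> (fps_nth F) g \<longleftrightarrow>
     ereal \<epsilon> \<le> fps_conv_radius F \<and> (\<forall>s. \<bar>s\<bar> < \<epsilon> \<longrightarrow> g s = eval_fps F (of_real s))"
proof
  assume F: "has_ps \<epsilon> (fps_nth F) g"
  have "fps_conv_radius F \<ge> ereal \<epsilon>"
    unfolding fps_conv_radius_def
    by (rule conv_radius_geI_ex') (use F in \<open>auto simp: has_ps_def sums_iff\<close>)
  moreover have "g s = eval_fps F (of_real s)" if "\<bar>s\<bar> < \<epsilon>" for s
    using F that unfolding has_ps_def eval_fps_def by (simp add: sums_iff)
  ultimately show "ereal \<epsilon> \<le> fps_conv_radius F \<and> (\<forall>s. \<bar>s\<bar> < \<epsilon> \<longrightarrow> g s = eval_fps F (of_real s))"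
    by blast
next
  assume "ereal \<epsilon> \<le> fps_conv_radius F \<and> (\<forall>s. \<bar>s\<bar> < \<epsilon> \<longrightarrow> g s = eval_fps F (of_real s))"
  then show "has_ps \<epsilon> (fps_nth F) g"
    unfolding has_ps_def by (auto intro!: sums_eval_fps norm_of_real_less_fps_conv_radius)
qed

lemma has_ps_add:
  assumes "has_ps \<epsilon> (fps_nth F) g" "has_ps \<epsilon> (fps_nth G) h"
  shows "has_ps \<epsilon> (fps_nth (F + G)) (\<lambda>s. g s + h s)"
proof -
  have "ereal \<epsilon> \<le> fps_conv_radius (F + G)"
    using assms fps_conv_radius_add[of F G]
    by (auto simp: has_ps_iff_eval_fps intro: order.trans[OF min.boundedI])
  with assms show ?thesis
    by (auto simp: has_ps_iff_eval_fps intro!: eval_fps_add[symmetric] norm_of_real_less_fps_conv_radius)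
qed

lemma has_ps_mult:
  assumes "has_ps \<epsilon> (fps_nth F) g" "has_ps \<epsilon> (fps_nth G) h"
  shows "has_ps \<epsilon> (fps_nth (F * G)) (\<lambda>s. g s * h s)"
proof -
  have "ereal \<epsilon> \<le> fps_conv_radius (F * G)"
    using assms fps_conv_radius_mult[of F G]
    by (auto simp: has_ps_iff_eval_fps intro: order.trans[OF min.boundedI])
  with assms show ?thesis
    by (auto simp: has_ps_iff_eval_fps intro!: eval_fps_mult[symmetric] norm_of_real_less_fps_conv_radius)
qed

lemma has_ps_const: "has_ps \<epsilon> (fps_nth (fps_const c)) (\<lambda>s. c)"
  by (simp add: has_ps_iff_eval_fps)

lemma has_ps_sum:
  assumes "\<And>x. x \<in> S \<Longrightarrow> has_ps \<epsilon> (fps_nth (F x)) (g x)"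
  shows "has_ps \<epsilon> (fps_nth (\<Sum>x\<in>S. F x)) (\<lambda>s. \<Sum>x\<in>S. g x s)"
  using assms
  by (induction S rule: infinite_finite_induct)
     (auto intro: has_ps_add has_ps_const[of _ 0, simplified])

lemma has_ps_prod:
  assumes "\<And>x. x \<in> S \<Longrightarrow> has_ps \<epsilon> (fps_nth (F x)) (g x)"
  shows "has_ps \<epsilon> (fps_nth (\<Prod>x\<in>S. F x)) (\<lambda>s. \<Prod>x\<in>S. g x s)"
  using assms
  by (induction S rule: infinite_finite_induct)
     (auto intro: has_ps_mult has_ps_const[of _ 1, simplified])

lemma has_ps_power:
  assumes "has_ps \<epsilon> (fps_nth F) g"
  shows "has_ps \<epsilon> (fps_nth (F ^ k)) (\<lambda>s. g s ^ k)"
  using has_ps_prod[of "{..<k}" \<epsilon> "\<lambda>_. F" "\<lambda>_. g"] assms by simp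

lemma has_ps_poly: "has_ps \<epsilon> (fps_nth (fps_of_poly p)) (\<lambda>s. poly p (of_real s))"
  by (simp add: has_ps_iff_eval_fps)

lemma has_ps_zero_imp_fps_zero:
  assumes F: "has_ps \<epsilon> (fps_nth F) g" and "\<epsilon> > 0" and g: "\<And>s. \<bar>s\<bar> < \<epsilon> \<Longrightarrow> g s = 0"
  shows "F = 0"
proof (rule eval_fps_eqD)
  have radius: "ereal \<epsilon> \<le> fps_conv_radius F"
    using F by (simp add: has_ps_iff_eval_fps)
  moreover have "0 < ereal \<epsilon>"
    using \<open>\<epsilon> > 0\<close> by simp
  ultimately show "fps_conv_radius F > 0"
    by (rule order.strict_trans2[rotated])
  define U where "U = complex_of_real ` {-\<epsilon><..<\<epsilon>}"
  have "eval_fps F z = 0" if "z \<in> ball 0 \<epsilon>" for z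
  proof (rule analytic_continuation[of "eval_fps F" "ball 0 \<epsilon>" U 0])
    show "eval_fps F holomorphic_on ball 0 \<epsilon>"
      using radius by (intro holomorphic_on_eval_fps) (auto simp: ball_eball_mono)
    show "0 islimpt U"
      unfolding islimpt_approachable
    proof (intro allI impI)
      fix e :: real assume "e > 0"
      have "complex_of_real (min e \<epsilon> / 2) \<in> U"
        unfolding U_def using \<open>e > 0\<close> \<open>\<epsilon> > 0\<close> by (intro imageI) auto
      then show "\<exists>x'\<in>U. x' \<noteq> 0 \<and> dist x' 0 < e"
        using \<open>e > 0\<close> \<open>\<epsilon> > 0\<close> by (intro bexI) auto
    qed
    show "\<And>z. z \<in> U \<Longrightarrow> eval_fps F z = 0"
      using F g unfolding U_def has_ps_iff_eval_fps by auto
  qed (use that \<open>\<epsilon> > 0\<close> in \<open>auto simp: U_def\<close>)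
  then show "\<forall>\<^sub>F z in nhds 0. eval_fps F z = eval_fps 0 z"
    using \<open>\<epsilon> > 0\<close> eventually_nhds_in_open[of "ball 0 \<epsilon>" 0] by (auto elim!: eventually_mono)
qed simp

section \<open>Weighted degrees and the Newton polyhedron\<close>

definition supp_wmin :: "nat \<Rightarrow> (nat \<Rightarrow> real) \<Rightarrow> cpoly \<Rightarrow> real" where
  "supp_wmin n w g = Min ((\<lambda>\<beta>. wdot n w (rvec n \<beta>)) ` supp g)"

lemma supp_wmin_le_wdot:
  assumes fin: "finite (supp g)" and w: "\<forall>i\<in>{1..n}. w i \<ge> 0" and x: "x \<in> newton_plus n g"
  shows "supp_wmin n w g \<le> wdot n w x"
proof -
  obtain \<mu> where \<mu>: "\<forall>\<alpha>\<in>supp g. \<mu> \<alpha> \<ge> 0" "sum \<mu> (supp g) = 1"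
     "\<forall>i\<in>{1..n}. x i \<ge> (\<Sum>\<alpha>\<in>supp g. \<mu> \<alpha> * real (\<alpha> i))"
    using x unfolding newton_plus_def by blast
  have "supp_wmin n w g = (\<Sum>\<alpha>\<in>supp g. \<mu> \<alpha> * supp_wmin n w g)"
    using \<mu>(2) by (simp add: sum_distrib_right[symmetric])
  also have "\<dots> \<le> (\<Sum>\<alpha>\<in>supp g. \<mu> \<alpha> * wdot n w (rvec n \<alpha>))"
    using \<mu>(1) fin by (intro sum_mono mult_left_mono) (auto simp: supp_wmin_def)
  also have "\<dots> = (\<Sum>i\<in>{1..n}. w i * (\<Sum>\<alpha>\<in>supp g. \<mu> \<alpha> * real (\<alpha> i)))"
    unfolding wdot_def rvec_def sum_distrib_left
    by (subst sum.swap) (auto intro!: sum.cong simp: mult_ac)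
  also have "\<dots> \<le> wdot n w x"
    unfolding wdot_def using w \<mu>(3) by (intro sum_mono mult_left_mono) auto
  finally show ?thesis .
qed

lemma rvec_in_newton_plus:
  assumes "finite (supp g)" and "\<beta> \<in> supp g"
  shows "rvec n \<beta> \<in> newton_plus n g"
  unfolding newton_plus_def
proof (intro CollectI conjI exI[of _ "\<lambda>\<alpha>. if \<alpha> = \<beta> then 1 else 0"] ballI allI impI)
  fix i assume "i \<in> {1..n}"
  have "(\<Sum>\<alpha>\<in>supp g. (if \<alpha> = \<beta> then 1 else 0) * real (\<alpha> i)) = real (\<beta> i)"
    using assms by (simp add: sum.delta if_distrib[of "\<lambda>c. c * real _"] cong: if_cong)
  then show "(\<Sum>\<alpha>\<in>supp g. (if \<alpha> = \<beta> then 1 else 0) * real (\<alpha> i)) \<le> rvec n \<beta> i"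
    using \<open>i \<in> {1..n}\<close> by (simp add: rvec_def)
qed (use assms in \<open>auto simp: rvec_def\<close>)

lemma supp_wmin_le:
  "finite (supp g) \<Longrightarrow> \<beta> \<in> supp g \<Longrightarrow> supp_wmin n w g \<le> wdot n w (rvec n \<beta>)"
  unfolding supp_wmin_def by auto

lemma supp_wmin_attained:
  assumes "finite (supp g)" "supp g \<noteq> {}"
  obtains \<beta> where "\<beta> \<in> supp g" "supp_wmin n w g = wdot n w (rvec n \<beta>)"
proof -
  have "supp_wmin n w g \<in> (\<lambda>\<beta>. wdot n w (rvec n \<beta>)) ` supp g"
    unfolding supp_wmin_def using assms by (intro Min_in) auto
  with that show ?thesis by blast
qed

lemma dW_eq_supp_wmin:
  assumes fin: "finite (supp g)" and ne: "supp g \<noteq> {}"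
  shows "dW n w g = supp_wmin n (\<lambda>i. real (w i)) g"
  unfolding dW_def
proof (rule cInf_eq_minimum)
  obtain \<beta> where "\<beta> \<in> supp g" "supp_wmin n (\<lambda>i. real (w i)) g = wdot n (\<lambda>i. real (w i)) (rvec n \<beta>)"
    using supp_wmin_attained[OF fin ne] by metis
  then show "supp_wmin n (\<lambda>i. real (w i)) g \<in> {wdot n (\<lambda>i. real (w i)) x | x. x \<in> newton_plus n g}"
    using rvec_in_newton_plus[OF fin] by auto
qed (use supp_wmin_le_wdot[OF fin] in auto)

text \<open>A positive weight vector cuts out a compact face, so its minimum is read off
  the Newton boundary.\<close>
lemma supp_wmin_le_of_newton_boundary_eq_pos:
  assumes fg: "finite (supp g)" and fh: "finite (supp h)" "supp h \<noteq> {}"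
    and eq: "newton_boundary n g = newton_boundary n h" and w: "\<forall>i\<in>{1..n}. w i > 0"
  shows "supp_wmin n w g \<le> supp_wmin n w h"
proof -
  have w0: "\<forall>i\<in>{1..n}. w i \<ge> 0" using w by auto
  obtain \<beta> where \<beta>: "\<beta> \<in> supp h" "supp_wmin n w h = wdot n w (rvec n \<beta>)"
    using supp_wmin_attained[OF fh] by metis
  have "rvec n \<beta> \<in> {x \<in> newton_plus n h. \<forall>y\<in>newton_plus n h. wdot n w x \<le> wdot n w y}"
    using rvec_in_newton_plus[OF fh(1) \<beta>(1)] supp_wmin_le_wdot[OF fh(1) w0] \<beta>(2) by auto
  then have "rvec n \<beta> \<in> newton_boundary n h"
    unfolding newton_boundary_def using w by blast
  then have "rvec n \<beta> \<in> newton_plus n g"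
    using eq unfolding newton_boundary_def by blast
  from supp_wmin_le_wdot[OF fg w0 this] \<beta>(2) show ?thesis by simp
qed

text \<open>Nonnegative weights are handled by perturbing them to positive ones.\<close>
lemma supp_wmin_le_of_newton_boundary_eq:
  assumes fg: "finite (supp g)" "supp g \<noteq> {}" and fh: "finite (supp h)" "supp h \<noteq> {}"
    and eq: "newton_boundary n g = newton_boundary n h" and w: "\<forall>i\<in>{1..n}. w i \<ge> 0"
  shows "supp_wmin n w g \<le> supp_wmin n w h"
proof (rule field_le_epsilon)
  fix e :: real assume "e > 0"
  obtain \<beta> where \<beta>: "\<beta> \<in> supp h" "supp_wmin n w h = wdot n w (rvec n \<beta>)"
    using supp_wmin_attained[OF fh] by metis
  define C where "C = (\<Sum>i\<in>{1..n}. rvec n \<beta> i)"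
  have "C \<ge> 0" unfolding C_def by (intro sum_nonneg) (simp add: rvec_def)
  define e' where "e' = e / (C + 1)"
  have "e' > 0" "e' * C \<le> e"
    using \<open>e > 0\<close> \<open>C \<ge> 0\<close> by (auto simp: e'_def field_simps)
  define w' where "w' = (\<lambda>i. w i + e')"
  have w'_pos: "\<forall>i\<in>{1..n}. w' i > 0"
    using w \<open>e' > 0\<close> unfolding w'_def by (auto intro: add_nonneg_pos)
  obtain \<gamma> where \<gamma>: "\<gamma> \<in> supp g" "supp_wmin n w' g = wdot n w' (rvec n \<gamma>)"
    using supp_wmin_attained[OF fg] by metis
  have "supp_wmin n w g \<le> wdot n w (rvec n \<gamma>)"
    by (rule supp_wmin_le[OF fg(1) \<gamma>(1)])
  also have "\<dots> \<le> wdot n w' (rvec n \<gamma>)"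
    unfolding wdot_def w'_def using \<open>e' > 0\<close>
    by (intro sum_mono mult_right_mono) (auto simp: rvec_def)
  also have "\<dots> \<le> supp_wmin n w' h"
    using \<gamma>(2) supp_wmin_le_of_newton_boundary_eq_pos[OF fg(1) fh eq w'_pos] by simp
  also have "\<dots> \<le> wdot n w' (rvec n \<beta>)"
    by (rule supp_wmin_le[OF fh(1) \<beta>(1)])
  also have "\<dots> = supp_wmin n w h + e' * C"
    unfolding \<beta>(2) wdot_def w'_def C_def by (simp add: distrib_right sum.distrib sum_distrib_left)
  finally show "supp_wmin n w g \<le> supp_wmin n w h + e"
    using \<open>e' * C \<le> e\<close> by simp
qed

lemma dW_eq_of_newton_boundary_eq:
  assumes "finite (supp g)" "supp g \<noteq> {}" "finite (supp h)" "supp h \<noteq> {}"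
    and "newton_boundary n g = newton_boundary n h"
  shows "dW n w g = dW n w h"
  using supp_wmin_le_of_newton_boundary_eq[OF assms, of "\<lambda>i. real (w i)"]
    supp_wmin_le_of_newton_boundary_eq[OF assms(3,4,1,2) assms(5)[symmetric], of "\<lambda>i. real (w i)"]
  by (simp add: dW_eq_supp_wmin assms)

section \<open>Slices, partial derivatives and weighted parts\<close>

definition wdeg :: "nat \<Rightarrow> (nat \<Rightarrow> nat) \<Rightarrow> (nat \<Rightarrow> nat) \<Rightarrow> nat" where
  "wdeg n w \<alpha> = (\<Sum>j\<in>{1..n}. w j * \<alpha> j)"

definition whom_part :: "nat \<Rightarrow> (nat \<Rightarrow> nat) \<Rightarrow> cpoly \<Rightarrow> nat \<Rightarrow> cpoly" where
  "whom_part n w g L = (\<lambda>\<alpha>. if wdeg n w \<alpha> = L then g \<alpha> else 0)"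

lemma wdot_rvec: "wdot n (\<lambda>i. real (w i)) (rvec n \<beta>) = real (wdeg n w \<beta>)"
  unfolding wdot_def rvec_def wdeg_def by simp

lemma dW_eq_wdeg:
  assumes "finite (supp g)" "supp g \<noteq> {}"
  obtains \<beta> where "\<beta> \<in> supp g" "dW n w g = real (wdeg n w \<beta>)"
  using supp_wmin_attained[OF assms] dW_eq_supp_wmin[OF assms] by (metis wdot_rvec)

lemma wdeg_upd_0 [simp]: "wdeg n w (\<alpha>(0 := k)) = wdeg n w \<alpha>"
  unfolding wdeg_def by (intro sum.cong) auto

lemma wdeg_upd_Suc:
  assumes "i \<in> {1..n}"
  shows "wdeg n w (\<beta>(i := \<beta> i + 1)) = wdeg n w \<beta> + w i"
proof -
  have "wdeg n w (\<beta>(i := \<beta> i + 1)) = (\<Sum>j\<in>{1..n}. w j * \<beta> j + (if j = i then w i else 0))"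
    unfolding wdeg_def by (intro sum.cong) auto
  also have "\<dots> = wdeg n w \<beta> + w i"
    using assms unfolding wdeg_def by (simp add: sum.distrib)
  finally show ?thesis .
qed

lemma peval_zero [simp]: "peval n (\<lambda>_. 0) z = 0"
  unfolding peval_def supp_def by simp

lemma slice_eq_0: "\<beta> 0 \<noteq> 0 \<Longrightarrow> slice g t \<beta> = 0"
  unfolding slice_def by simp

lemma slice_eq_sum_powers:
  assumes "\<beta> 0 = 0"
  shows "slice g t \<beta> = (\<Sum>k | g (\<beta>(0 := k)) \<noteq> 0. g (\<beta>(0 := k)) * t ^ k)"
proof -
  have "\<beta>(0 := \<alpha> 0) = \<alpha>" if "\<alpha>(0 := 0) = \<beta>" for \<alpha>
    using that by auto
  then show ?thesis
    unfolding slice_def using assms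
    by (auto intro!: sum.reindex_bij_witness[of _ "\<lambda>k. \<beta>(0 := k)" "\<lambda>\<alpha>. \<alpha> 0"])
qed

lemma supp_slice_subset: "supp (slice g t) \<subseteq> (\<lambda>\<alpha>. \<alpha>(0 := 0)) ` supp g"
proof
  fix \<beta> assume "\<beta> \<in> supp (slice g t)"
  then have "(\<Sum>\<alpha> | g \<alpha> \<noteq> 0 \<and> \<alpha>(0 := 0) = \<beta>. g \<alpha> * t ^ \<alpha> 0) \<noteq> 0"
    unfolding supp_def slice_def by (auto split: if_splits)
  then obtain \<alpha> where "g \<alpha> \<noteq> 0" "\<alpha>(0 := 0) = \<beta>"
    by (auto elim: sum.not_neutral_contains_not_neutral)
  then show "\<beta> \<in> (\<lambda>\<alpha>. \<alpha>(0 := 0)) ` supp g"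
    by (auto simp: supp_def)
qed

lemma finite_supp_slice: "finite (supp g) \<Longrightarrow> finite (supp (slice g t))"
  using supp_slice_subset finite_subset by blast

lemma supp_pderivv: "supp (pderivv i g) = (\<lambda>\<alpha>. \<alpha>(i := \<alpha> i + 1)) -` supp g"
  unfolding supp_def pderivv_def using of_nat_neq_0[where 'a=complex] by auto

lemma finite_supp_pderivv:
  assumes "finite (supp g)"
  shows "finite (supp (pderivv i g))"
proof -
  have "inj (\<lambda>\<alpha>::nat \<Rightarrow> nat. \<alpha>(i := \<alpha> i + 1))"
  proof (rule injI, rule ext)
    fix a b :: "nat \<Rightarrow> nat" and j
    assume "a(i := a i + 1) = b(i := b i + 1)"
    then have "(a(i := a i + 1)) j = (b(i := b i + 1)) j" "(a(i := a i + 1)) i = (b(i := b i + 1)) i"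
      by simp_all
    then show "a j = b j"
      by (cases "j = i") auto
  qed
  then show ?thesis
    unfolding supp_pderivv using assms by (rule finite_vimageI[rotated])
qed

lemma slice_pderivv:
  assumes "i \<noteq> 0"
  shows "slice (pderivv i g) t = pderivv i (slice g t)"
proof
  fix \<beta>
  show "slice (pderivv i g) t \<beta> = pderivv i (slice g t) \<beta>"
  proof (cases "\<beta> 0 = 0")
    case True
    define \<beta>' where "\<beta>' = \<beta>(i := \<beta> i + 1)"
    have "\<beta>' 0 = 0"
      using True assms by (simp add: \<beta>'_def)
    have upd: "pderivv i g (\<beta>(0 := k)) = of_nat (\<beta> i + 1) * g (\<beta>'(0 := k))" for k
      using assms by (simp add: pderivv_def \<beta>'_def fun_upd_twist)
    have "slice (pderivv i g) t \<beta> = (\<Sum>k | g (\<beta>'(0 := k)) \<noteq> 0. of_nat (\<beta> i + 1) * g (\<beta>'(0 := k)) * t ^ k)"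
      unfolding slice_eq_sum_powers[where g="pderivv i g" and t=t and \<beta>=\<beta>, OF True] upd by (simp del: of_nat_Suc)
    also have "\<dots> = pderivv i (slice g t) \<beta>"
      unfolding pderivv_def slice_eq_sum_powers[where g=g and t=t and \<beta>=\<beta>', OF \<open>\<beta>' 0 = 0\<close>, unfolded \<beta>'_def]
      by (simp add: sum_distrib_left mult.assoc \<beta>'_def)
    finally show ?thesis .
  next
    case False
    then show ?thesis
      using assms by (simp add: pderivv_def slice_eq_0)
  qed
qed

lemma slice_whom_part:
  "slice (whom_part n w g L) t \<beta> = (if wdeg n w \<beta> = L then slice g t \<beta> else 0)"
proof (cases "wdeg n w \<beta> = L")
  case True
  have "whom_part n w g L \<alpha> = g \<alpha>" if "\<alpha>(0 := 0) = \<beta>" for \<alpha>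
    using True wdeg_upd_0[of n w \<alpha> 0] that by (simp add: whom_part_def)
  then have "{\<alpha>. whom_part n w g L \<alpha> \<noteq> 0 \<and> \<alpha>(0 := 0) = \<beta>} = {\<alpha>. g \<alpha> \<noteq> 0 \<and> \<alpha>(0 := 0) = \<beta>}"
    by (intro Collect_cong) metis
  with True show ?thesis
    unfolding slice_def by (auto intro!: sum.cong simp: \<open>\<And>\<alpha>. \<alpha>(0 := 0) = \<beta> \<Longrightarrow> whom_part n w g L \<alpha> = g \<alpha>\<close>)
next
  case False
  have "whom_part n w g L \<alpha> = 0" if "\<alpha>(0 := 0) = \<beta>" for \<alpha>
    using False wdeg_upd_0[of n w \<alpha> 0] that by (simp add: whom_part_def)
  with False show ?thesis
    unfolding slice_def by simp
qed

lemma pderivv_whom_part: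
  assumes "i \<in> {1..n}"
  shows "pderivv i (whom_part n w g L) =
           (if w i \<le> L then whom_part n w (pderivv i g) (L - w i) else (\<lambda>_. 0))"
proof
  fix \<alpha>
  have "wdeg n w (\<alpha>(i := \<alpha> i + 1)) = wdeg n w \<alpha> + w i"
    by (rule wdeg_upd_Suc[OF assms])
  then show "pderivv i (whom_part n w g L) \<alpha> =
      (if w i \<le> L then whom_part n w (pderivv i g) (L - w i) else (\<lambda>_. 0)) \<alpha>"
    by (auto simp: pderivv_def whom_part_def)
qed

lemma peval_whom_part:
  assumes fin: "finite (supp g)"
  shows "peval n (whom_part n w g L) z =
    (\<Sum>\<alpha>\<in>supp g. if wdeg n w \<alpha> = L then g \<alpha> * (\<Prod>j\<in>{0..n}. z j ^ \<alpha> j) else 0)"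
proof -
  have "supp (whom_part n w g L) = {\<alpha>\<in>supp g. wdeg n w \<alpha> = L}"
    by (auto simp: supp_def whom_part_def)
  then have "peval n (whom_part n w g L) z = (\<Sum>\<alpha>\<in>{\<alpha>\<in>supp g. wdeg n w \<alpha> = L}. g \<alpha> * (\<Prod>j\<in>{0..n}. z j ^ \<alpha> j))"
    unfolding peval_def by (intro sum.cong) (simp_all add: whom_part_def)
  also have "\<dots> = (\<Sum>\<alpha>\<in>supp g. if wdeg n w \<alpha> = L then g \<alpha> * (\<Prod>j\<in>{0..n}. z j ^ \<alpha> j) else 0)"
    by (rule sum.inter_filter[OF fin])
  finally show ?thesis .
qed

lemma facef_slice_eq_whom_part:
  assumes fin: "finite (supp g)" and d: "dW n w (slice g t) = real L"
  shows "facef n w (slice g t) = slice (whom_part n w g L) t"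
proof
  fix \<beta>
  show "facef n w (slice g t) \<beta> = slice (whom_part n w g L) t \<beta>"
  proof (cases "\<beta> \<in> supp (slice g t)")
    case True
    then have "rvec n \<beta> \<in> newton_plus n (slice g t)"
      by (rule rvec_in_newton_plus[OF finite_supp_slice[OF fin]])
    then have "rvec n \<beta> \<in> Delta n w (slice g t) \<longleftrightarrow> wdeg n w \<beta> = L"
      unfolding Delta_def d using wdot_rvec[of n w \<beta>] by simp
    then show ?thesis
      unfolding facef_def slice_whom_part by simp
  next
    case False
    then show ?thesis
      unfolding facef_def slice_whom_part supp_def by simp
  qed
qed

lemma peval_slice:
  assumes fin: "finite (supp g)"
  shows "peval n (slice g t) z = peval n g (z(0 := t))"
proof -
  define T where "T = (\<lambda>\<alpha>. \<alpha>(0 := 0)) ` supp g"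
  define P where "P = (\<lambda>\<beta>. \<Prod>j\<in>{0..n}. z j ^ \<beta> j)"
  have fibre: "{\<alpha>. g \<alpha> \<noteq> 0 \<and> \<alpha>(0 := 0) = \<beta>} = {\<alpha>\<in>supp g. \<alpha>(0 := 0) = \<beta>}" for \<beta>
    by (auto simp: supp_def)
  have P_upd: "t ^ \<alpha> 0 * P (\<alpha>(0 := 0)) = (\<Prod>j\<in>{0..n}. (z(0 := t)) j ^ \<alpha> j)" for \<alpha>
  proof -
    have "{0..n} = insert 0 {1..n}" by auto
    then show ?thesis
      unfolding P_def by (simp add: prod.insert)
  qed
  have "peval n (slice g t) z = (\<Sum>\<beta>\<in>T. slice g t \<beta> * P \<beta>)"
    unfolding peval_def P_def T_def using fin supp_slice_subset[of g t]
    by (intro sum.mono_neutral_left) (auto simp: supp_def)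
  also have "\<dots> = (\<Sum>\<beta>\<in>T. \<Sum>\<alpha>\<in>{\<alpha>\<in>supp g. \<alpha>(0 := 0) = \<beta>}. g \<alpha> * (t ^ \<alpha> 0 * P (\<alpha>(0 := 0))))"
    unfolding T_def slice_def fibre by (auto intro!: sum.cong simp: sum_distrib_right mult.assoc)
  also have "\<dots> = (\<Sum>\<alpha>\<in>supp g. g \<alpha> * (t ^ \<alpha> 0 * P (\<alpha>(0 := 0))))"
    using fin unfolding T_def by (intro sum.group) auto
  also have "\<dots> = peval n g (z(0 := t))"
    unfolding peval_def P_upd ..
  finally show ?thesis .
qed

text \<open>A monomial of g of smaller weighted degree would survive in g_t for some small t,
  since its coefficient in g_t is a nonzero polynomial in t.\<close>
lemma wdeg_ge_of_dW_const:
  assumes fin: "finite (supp g)" and "e > 0"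
    and d: "\<forall>t. cmod t < e \<longrightarrow> dW n w (slice g t) = real D" and \<alpha>: "\<alpha> \<in> supp g"
  shows "D \<le> wdeg n w \<alpha>"
proof -
  define \<beta> where "\<beta> = \<alpha>(0 := 0)"
  define K where "K = {k. g (\<beta>(0 := k)) \<noteq> 0}"
  define p where "p = (\<Sum>k\<in>K. monom (g (\<beta>(0 := k))) k)"
  have "inj (\<lambda>k. \<beta>(0 := k))"
    by (rule injI, drule fun_cong[of _ _ 0]) simp
  moreover have "K = (\<lambda>k. \<beta>(0 := k)) -` supp g"
    unfolding K_def supp_def by auto
  ultimately have "finite K"
    using finite_vimageI[OF fin] by simp
  have "\<beta>(0 := \<alpha> 0) = \<alpha>"
    by (simp add: \<beta>_def)
  then have "\<alpha> 0 \<in> K" "coeff p (\<alpha> 0) = g \<alpha>"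
    using \<alpha> \<open>finite K\<close> unfolding p_def coeff_sum coeff_monom K_def
    by (simp_all add: supp_def sum.delta)
  then have "p \<noteq> 0"
    using \<alpha> by (auto simp: supp_def)
  have "infinite (ball (0::complex) e)"
    using islimpt_eq_infinite_ball[of "0::complex" UNIV] \<open>e > 0\<close> by simp
  then have "\<not> ball 0 e \<subseteq> {x. poly p x = 0}"
    using finite_subset[OF _ poly_roots_finite[OF \<open>p \<noteq> 0\<close>]] by blast
  then obtain t where t: "t \<in> ball 0 e" "poly p t \<noteq> 0"
    by blast
  have "poly p t = slice g t \<beta>"
    unfolding p_def K_def slice_eq_sum_powers[where \<beta>=\<beta> and g=g and t=t, OF fun_upd_same[of \<alpha> 0 0, folded \<beta>_def]]
    by (simp add: poly_sum poly_monom)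
  then have "\<beta> \<in> supp (slice g t)"
    using t by (simp add: supp_def)
  then have "dW n w (slice g t) \<le> real (wdeg n w \<beta>)"
    using dW_eq_supp_wmin[OF finite_supp_slice[OF fin], of t n w]
      supp_wmin_le[OF finite_supp_slice[OF fin], of \<beta> t n "\<lambda>i. real (w i)"]
    by (force simp: wdot_rvec)
  then show ?thesis
    using d t(1) by (simp add: \<beta>_def)
qed

text \<open>The zero polynomial is degenerate: its face functions vanish on all of C^{*n},
  where its gradient is zero.\<close>
lemma nondeg_supp_nonempty:
  assumes "nondeg n {k} g"
  shows "supp (g k) \<noteq> {}"
proof
  define z where "z = (\<lambda>i. if i \<in> {1..n} then 1 else 0 :: complex)"
  assume "supp (g k) = {}"
  then have "g k = (\<lambda>_. 0)"
    unfolding supp_def by auto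
  then have zero: "facef n w (g k) = (\<lambda>_. 0)" "pderivv i (\<lambda>_. 0) = (\<lambda>_. 0)" for w i
    unfolding facef_def pderivv_def by auto
  have "z \<in> Cstar {1..n}"
    unfolding Cstar_def z_def by auto
  moreover have "\<And>w z. \<forall>i\<in>{1..n}. w i > 0 \<Longrightarrow> z \<in> Cstar {1..n} \<Longrightarrow>
      \<forall>k'\<in>{k}. peval n (facef n w (g k')) z = 0 \<Longrightarrow>
      cindep {k} {1..n} (\<lambda>k' i. peval n (pderivv i (facef n w (g k'))) z)"
    using assms unfolding nondeg_def by blast
  ultimately have "cindep {k} {1..n} (\<lambda>k' i. peval n (pderivv i (facef n (\<lambda>_. 1) (g k'))) z)"
    using zero by simp
  moreover have "\<forall>i\<in>{1..n}. (\<Sum>k'\<in>{k}. (\<lambda>_. 1) k' * peval n (pderivv i (facef n (\<lambda>_. 1) (g k'))) z) = 0"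
    by (simp add: zero)
  ultimately show False
    unfolding cindep_def by (auto dest: spec[of _ "\<lambda>_. 1 :: complex"])
qed

lemma tame_radiusD:
  assumes "tame_radius n P g R" "I \<noteq> {}" "\<And>k. k \<in> P \<Longrightarrow> I \<in> Vset n (g k)"
    "\<exists>i\<in>{1..n}. w i \<noteq> 0" "{i\<in>{1..n}. w i = 0} = I" "\<And>i. i \<in> I \<Longrightarrow> u i \<noteq> 0"
    "(\<Sum>i\<in>I. (cmod (u i))\<^sup>2) < R" "z \<in> Cstar {1..n}" "\<And>i. i \<in> I \<Longrightarrow> z i = u i"
    "\<And>k. k \<in> P \<Longrightarrow> peval n (facef n w (g k)) z = 0"
  shows "cindep P ({1..n} - I) (\<lambda>k i. peval n (pderivv i (facef n w (g k))) z)"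
  by (rule assms(1)[unfolded tame_radius_def, THEN conjunct2, rule_format,
        OF assms(2-10)])

section \<open>Substituting power series into polynomials\<close>

definition fps_peval :: "nat \<Rightarrow> (nat \<Rightarrow> complex fps) \<Rightarrow> cpoly \<Rightarrow> complex fps" where
  "fps_peval n X g = (\<Sum>\<alpha>\<in>supp g. fps_const (g \<alpha>) * (\<Prod>j\<in>{0..n}. X j ^ \<alpha> j))"

lemma has_ps_fps_peval:
  assumes "\<forall>j\<in>{0..n}. has_ps \<epsilon> (fps_nth (X j)) (\<lambda>s. x s j)"
  shows "has_ps \<epsilon> (fps_nth (fps_peval n X g)) (\<lambda>s. peval n g (x s))"
  unfolding fps_peval_def peval_def
  by (intro has_ps_sum has_ps_mult has_ps_const has_ps_prod has_ps_power) (use assms in auto)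

lemma fps_prod_nth_0: "fps_nth (\<Prod>x\<in>S. F x) 0 = (\<Prod>x\<in>S. fps_nth (F x) 0)"
  by (induction S rule: infinite_finite_induct) auto

lemma fps_eq_X_power_mult_shift:
  assumes "\<forall>m<v. fps_nth F m = 0"
  shows "F = fps_X ^ v * fps_shift v F"
  using assms by (intro fps_ext) (simp add: fps_X_power_mult_nth)

lemma fps_mult_nth_of_low:
  fixes F G :: "'a :: semiring_0 fps"
  assumes "\<forall>m<N. fps_nth G m = 0"
  shows "fps_nth (F * G) N = fps_nth F 0 * fps_nth G N"
proof -
  have "fps_nth G (N - i) = 0" if "0 < i" "i \<le> N" for i
    using assms that by simp
  then have "fps_nth (F * G) N = (\<Sum>i=0..N. if i = 0 then fps_nth F 0 * fps_nth G N else 0)"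
    unfolding fps_mult_nth by (intro sum.cong) auto
  then show ?thesis by simp
qed

lemma fps_X_power_diff_mult_nth:
  assumes "\<forall>N'<\<nu>. fps_nth G N' = 0" "\<nu> \<le> \<mu>" "N \<le> \<mu>"
  shows "fps_nth (fps_X ^ (\<mu> - \<nu>) * G) N = (if N = \<mu> then fps_nth G \<nu> else 0)"
  using assms by (auto simp: fps_X_power_mult_nth)

lemma fps_monomial_eq_X_power_mult:
  assumes "\<forall>j\<in>S. \<forall>m<v j. fps_nth (X j) m = 0"
  shows "(\<Prod>j\<in>S. X j ^ \<alpha> j) = fps_X ^ (\<Sum>j\<in>S. v j * \<alpha> j) * (\<Prod>j\<in>S. fps_shift (v j) (X j) ^ \<alpha> j)"
proof -
  have "(\<Prod>j\<in>S. X j ^ \<alpha> j) = (\<Prod>j\<in>S. fps_X ^ (v j * \<alpha> j) * fps_shift (v j) (X j) ^ \<alpha> j)"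
  proof (intro prod.cong refl)
    fix j assume "j \<in> S"
    then have "X j = fps_X ^ v j * fps_shift (v j) (X j)"
      using assms by (intro fps_eq_X_power_mult_shift) auto
    then have "X j ^ \<alpha> j = (fps_X ^ v j * fps_shift (v j) (X j)) ^ \<alpha> j"
      by (rule arg_cong)
    then show "X j ^ \<alpha> j = fps_X ^ (v j * \<alpha> j) * fps_shift (v j) (X j) ^ \<alpha> j"
      by (simp only: power_mult power_mult_distrib)
  qed
  then show ?thesis
    by (simp add: prod.distrib power_sum)
qed

text \<open>The coordinate t = x_0 has weight zero, so only the constant term of X 0 enters the
  leading coefficient.\<close>
lemma fps_peval_nth_le_wdeg:
  assumes fin: "finite (supp g)" and X: "\<forall>j\<in>{1..n}. \<forall>m<w j. fps_nth (X j) m = 0"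
    and L: "\<forall>\<alpha>\<in>supp g. L \<le> wdeg n w \<alpha>"
  shows "N < L \<Longrightarrow> fps_nth (fps_peval n X g) N = 0"
    and "fps_nth (fps_peval n X g) L = peval n (whom_part n w g L) ((\<lambda>j. fps_nth (X j) (w j))(0 := fps_nth (X 0) 0))"
proof -
  define v where "v = w(0 := 0)"
  define A where "A = (\<lambda>j. fps_nth (X j) (w j))(0 := fps_nth (X 0) 0)"
  have v: "\<forall>j\<in>{0..n}. \<forall>m<v j. fps_nth (X j) m = 0"
    using X by (auto simp: v_def)
  have "{0..n} = insert 0 {1..n}" by auto
  then have wdeg: "(\<Sum>j\<in>{0..n}. v j * \<alpha> j) = wdeg n w \<alpha>" for \<alpha>
    unfolding wdeg_def v_def by (simp add: sum.insert)
  define Y where "Y = (\<lambda>\<alpha>. \<Prod>j\<in>{0..n}. fps_shift (v j) (X j) ^ \<alpha> j)"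
  have Y0: "fps_nth (Y \<alpha>) 0 = (\<Prod>j\<in>{0..n}. A j ^ \<alpha> j)" for \<alpha>
    unfolding Y_def fps_prod_nth_0 by (intro prod.cong) (auto simp: A_def v_def fps_power_zeroth)
  have nth: "fps_nth (fps_peval n X g) N =
      (\<Sum>\<alpha>\<in>supp g. g \<alpha> * (if N < wdeg n w \<alpha> then 0 else fps_nth (Y \<alpha>) (N - wdeg n w \<alpha>)))" for N
    unfolding fps_peval_def fps_sum_nth fps_monomial_eq_X_power_mult[OF v] wdeg Y_def
    by (simp add: fps_X_power_mult_nth)
  show "fps_nth (fps_peval n X g) N = 0" if "N < L"
    unfolding nth using L that by (intro sum.neutral) force
  have "fps_nth (fps_peval n X g) L = (\<Sum>\<alpha>\<in>supp g. if wdeg n w \<alpha> = L then g \<alpha> * fps_nth (Y \<alpha>) 0 else 0)"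
    unfolding nth using L by (intro sum.cong) (auto simp: not_less)
  also have "\<dots> = peval n (whom_part n w g L) A"
    unfolding Y0 by (rule peval_whom_part[OF fin, symmetric])
  finally show "fps_nth (fps_peval n X g) L = peval n (whom_part n w g L) A" .
qed

section \<open>Triangular elimination ordered by the order of vanishing\<close>

definition comb :: "nat \<Rightarrow> (nat \<Rightarrow> nat \<Rightarrow> complex fps) \<Rightarrow> (nat \<Rightarrow> complex poly) \<Rightarrow> nat \<Rightarrow> complex fps" where
  "comb m V C j = (\<Sum>k\<in>{1..m}. fps_of_poly (C k) * V k j)"

definition unit_combs :: "nat \<Rightarrow> nat set \<Rightarrow> nat \<Rightarrow> (nat \<Rightarrow> complex poly) set" where
  "unit_combs m S i = {D. D i = 1 \<and> (\<forall>i'\<in>{1..m} - insert i S. D i' = 0)}"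

lemma unit_combs_mono: "S \<subseteq> S' \<Longrightarrow> unit_combs m S i \<subseteq> unit_combs m S' i"
  unfolding unit_combs_def by auto

lemma unit_combs_diff:
  assumes "D \<in> unit_combs m S i" "\<And>k i'. k \<in> K \<Longrightarrow> i' \<in> {1..m} - S \<Longrightarrow> E k i' = 0" "i \<in> {1..m} - S"
  shows "(\<lambda>i'. D i' - (\<Sum>k\<in>K. Q k * E k i')) \<in> unit_combs m S i"
  using assms unfolding unit_combs_def by auto

lemma comb_diff_sum:
  "comb m V (\<lambda>i. P i - (\<Sum>k\<in>K. Q k * R k i)) j =
     comb m V P j - (\<Sum>k\<in>K. fps_of_poly (Q k) * comb m V (R k) j)"
  unfolding comb_def fps_of_poly_diff fps_of_poly_sum fps_of_poly_mult
  by (simp add: algebra_simps sum_subtractf sum_distrib_left sum_distrib_right sum.swap[of _ K])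

lemma comb_unit_comb:
  fixes k :: nat
  assumes "inj_on \<sigma> {1..k}" "\<sigma> ` {1..k} \<subseteq> {1..m}" "C \<in> unit_combs m (\<sigma> ` {1..<k}) (\<sigma> k)" "1 \<le> k"
  shows "comb m V C j = V (\<sigma> k) j + (\<Sum>l\<in>{1..<k}. fps_of_poly (C (\<sigma> l)) * V (\<sigma> l) j)"
proof -
  have k: "{1..k} = insert k {1..<k}"
    using assms(4) by auto
  then have "\<sigma> ` {1..k} = insert (\<sigma> k) (\<sigma> ` {1..<k})"
    by simp
  then have "C i = 0" if "i \<in> {1..m} - \<sigma> ` {1..k}" for i
    using assms(3) that unfolding unit_combs_def by simp
  then have "comb m V C j = (\<Sum>i\<in>\<sigma> ` {1..k}. fps_of_poly (C i) * V i j)"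
    unfolding comb_def using assms(2) by (intro sum.mono_neutral_right) simp_all
  also have "\<dots> = (\<Sum>l\<in>{1..k}. fps_of_poly (C (\<sigma> l)) * V (\<sigma> l) j)"
    using sum.reindex[OF assms(1)] by (simp add: comp_def)
  also have "\<dots> = V (\<sigma> k) j + (\<Sum>l\<in>{1..<k}. fps_of_poly (C (\<sigma> l)) * V (\<sigma> l) j)"
    using assms(3) unfolding k unit_combs_def by simp
  finally show ?thesis .
qed

lemma permutes_restrict_inj:
  assumes "finite S" "inj_on \<sigma> S" "\<sigma> ` S \<subseteq> S"
  shows "(\<lambda>k. if k \<in> S then \<sigma> k else k) permutes S"
proof (rule bij_imp_permutes)
  have "inj_on (\<lambda>k. if k \<in> S then \<sigma> k else k) S"
    using assms(2) by (rule inj_on_cong[THEN iffD1, rotated]) simp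
  moreover have "(\<lambda>k. if k \<in> S then \<sigma> k else k) ` S = \<sigma> ` S"
    by (rule image_cong) simp_all
  moreover have "\<sigma> ` S = S"
    using card_image[OF assms(2)] by (intro card_subset_eq[OF assms(1,3)]) simp
  ultimately show "bij_betw (\<lambda>k. if k \<in> S then \<sigma> k else k) S S"
    unfolding bij_betw_def by simp
qed simp

context
  fixes m :: nat and A :: "nat set" and V :: "nat \<Rightarrow> nat \<Rightarrow> complex fps" and B :: nat
  assumes order_bounded: "\<And>C. \<exists>k\<in>{1..m}. coeff (C k) 0 \<noteq> 0 \<Longrightarrow>
    \<exists>N\<le>B. \<exists>j\<in>A. fps_nth (comb m V C j) N \<noteq> 0"
begin

definition order_comb :: "(nat \<Rightarrow> complex poly) \<Rightarrow> nat" where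
  "order_comb C = (LEAST N. \<exists>j\<in>A. fps_nth (comb m V C j) N \<noteq> 0)"

lemma order_comb:
  assumes "\<exists>k\<in>{1..m}. coeff (C k) 0 \<noteq> 0"
  shows "order_comb C \<le> B" "\<exists>j\<in>A. fps_nth (comb m V C j) (order_comb C) \<noteq> 0"
    and "\<And>N j. N < order_comb C \<Longrightarrow> j \<in> A \<Longrightarrow> fps_nth (comb m V C j) N = 0"
proof -
  obtain N where N: "N \<le> B" "\<exists>j\<in>A. fps_nth (comb m V C j) N \<noteq> 0"
    using order_bounded[OF assms] by blast
  then show "\<exists>j\<in>A. fps_nth (comb m V C j) (order_comb C) \<noteq> 0"
    unfolding order_comb_def by (intro LeastI)
  have "order_comb C \<le> N"
    unfolding order_comb_def using N(2) by (rule Least_le)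
  with N(1) show "order_comb C \<le> B" by simp
  show "fps_nth (comb m V C j) N' = 0" if "N' < order_comb C" "j \<in> A" for N' j
    using not_less_Least[OF that(1)[unfolded order_comb_def]] that(2) by blast
qed

lemma order_comb_geI:
  assumes "\<exists>k\<in>{1..m}. coeff (C k) 0 \<noteq> 0" "\<And>N j. N < p \<Longrightarrow> j \<in> A \<Longrightarrow> fps_nth (comb m V C j) N = 0"
  shows "p \<le> order_comb C"
  using order_comb(2)[OF assms(1)] assms(2) by (meson not_le)

lemma unit_comb_const_coeff:
  "i \<in> {1..m} \<Longrightarrow> D \<in> unit_combs m S i \<Longrightarrow> \<exists>k\<in>{1..m}. coeff (D k) 0 \<noteq> 0"
  unfolding unit_combs_def by force

definition max_order :: "nat set \<Rightarrow> nat \<Rightarrow> nat" where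
  "max_order S i = Max (order_comb ` unit_combs m S i)"

lemma max_order:
  assumes "i \<in> {1..m}"
  shows "\<And>D. D \<in> unit_combs m S i \<Longrightarrow> order_comb D \<le> max_order S i"
    and "\<exists>D\<in>unit_combs m S i. order_comb D = max_order S i"
proof -
  have "order_comb ` unit_combs m S i \<subseteq> {..B}"
    using order_comb(1)[OF unit_comb_const_coeff[OF assms]] by auto
  then have fin: "finite (order_comb ` unit_combs m S i)"
    using finite_subset by blast
  have "(\<lambda>i'. if i' = i then 1 else 0) \<in> unit_combs m S i"
    unfolding unit_combs_def by auto
  then have "order_comb ` unit_combs m S i \<noteq> {}"
    by blast
  show "order_comb D \<le> max_order S i" if "D \<in> unit_combs m S i" for D
    unfolding max_order_def using fin that by auto
  show "\<exists>D\<in>unit_combs m S i. order_comb D = max_order S i"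
    unfolding max_order_def using Max_in[OF fin \<open>_ \<noteq> {}\<close>] by force
qed

lemma max_order_mono:
  assumes "i \<in> {1..m}" "S \<subseteq> S'"
  shows "max_order S i \<le> max_order S' i"
proof -
  obtain D where D: "D \<in> unit_combs m S i" "order_comb D = max_order S i"
    using max_order(2)[OF assms(1)] by blast
  then have "D \<in> unit_combs m S' i"
    using unit_combs_mono[OF assms(2)] by blast
  from max_order(1)[OF assms(1) this] D(2) show ?thesis by simp
qed

text \<open>The state after r greedy steps. The last clause says that no unused index can be
  reduced to an order below those already reached; it keeps the orders nondecreasing.\<close>
definition greedy_inv :: "nat \<Rightarrow> (nat \<Rightarrow> nat) \<Rightarrow> (nat \<Rightarrow> nat \<Rightarrow> complex poly) \<Rightarrow> (nat \<Rightarrow> nat) \<Rightarrow> bool" where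
  "greedy_inv r \<sigma> Cs \<nu> \<longleftrightarrow>
    inj_on \<sigma> {1..r} \<and> \<sigma> ` {1..r} \<subseteq> {1..m} \<and>
    (\<forall>k\<in>{1..r}. Cs k \<in> unit_combs m (\<sigma> ` {1..<k}) (\<sigma> k) \<and> \<nu> k = order_comb (Cs k)) \<and>
    cindep {1..r} A (\<lambda>k j. fps_nth (comb m V (Cs k) j) (\<nu> k)) \<and>
    (\<forall>k\<in>{1..r}. \<forall>l\<in>{1..r}. k \<le> l \<longrightarrow> \<nu> k \<le> \<nu> l) \<and>
    (\<forall>i\<in>{1..m} - \<sigma> ` {1..r}. \<forall>k\<in>{1..r}. \<nu> k \<le> max_order (\<sigma> ` {1..r}) i)"

text \<open>If the leading coefficient of an optimal reduction of i were a combination of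
  the earlier leading coefficients, subtracting the corresponding shifted combinations
  would reduce i to a higher order.\<close>
lemma greedy_leading_coeff_not_in_span:
  assumes inv: "greedy_inv r \<sigma> Cs \<nu>" and i: "i \<in> {1..m} - \<sigma> ` {1..r}"
    and D: "D \<in> unit_combs m (\<sigma> ` {1..r}) i" "order_comb D = max_order (\<sigma> ` {1..r}) i"
  shows "\<not> (\<forall>j\<in>A. fps_nth (comb m V D j) (max_order (\<sigma> ` {1..r}) i) =
            (\<Sum>k\<in>{1..r}. c k * fps_nth (comb m V (Cs k) j) (\<nu> k)))"
proof
  define \<mu> where "\<mu> = max_order (\<sigma> ` {1..r}) i"
  assume span: "\<forall>j\<in>A. fps_nth (comb m V D j) \<mu> = (\<Sum>k\<in>{1..r}. c k * fps_nth (comb m V (Cs k) j) (\<nu> k))"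
  have Cs: "Cs k \<in> unit_combs m (\<sigma> ` {1..<k}) (\<sigma> k)" "\<nu> k = order_comb (Cs k)" "\<nu> k \<le> \<mu>"
    if "k \<in> {1..r}" for k
    using inv i that unfolding greedy_inv_def \<mu>_def by blast+
  have \<sigma>: "\<sigma> k \<in> {1..m}" if "k \<in> {1..r}" for k
    using inv that unfolding greedy_inv_def by blast
  define D' where "D' = (\<lambda>i'. D i' - (\<Sum>k\<in>{1..r}. monom (c k) (\<mu> - \<nu> k) * Cs k i'))"
  have "insert (\<sigma> k) (\<sigma> ` {1..<k}) \<subseteq> \<sigma> ` {1..r}" if "k \<in> {1..r}" for k
    using that by auto
  then have "Cs k i' = 0" if "k \<in> {1..r}" "i' \<in> {1..m} - \<sigma> ` {1..r}" for k i'
    using Cs(1)[OF that(1)] that unfolding unit_combs_def by blast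
  then have "D' \<in> unit_combs m (\<sigma> ` {1..r}) i"
    unfolding D'_def using D(1) i by (intro unit_combs_diff)
  have "fps_nth (comb m V D' j) N = 0" if "j \<in> A" "N \<le> \<mu>" for j N
  proof -
    have "fps_nth (fps_X ^ (\<mu> - \<nu> k) * comb m V (Cs k) j) N =
        (if N = \<mu> then fps_nth (comb m V (Cs k) j) (\<nu> k) else 0)" if k: "k \<in> {1..r}" for k
      using order_comb(3)[OF unit_comb_const_coeff[OF \<sigma>[OF k] Cs(1)[OF k]]] Cs(2,3)[OF k] \<open>j \<in> A\<close> \<open>N \<le> \<mu>\<close>
      by (intro fps_X_power_diff_mult_nth) auto
    then have "fps_nth (comb m V D' j) N =
        fps_nth (comb m V D j) N - (\<Sum>k\<in>{1..r}. c k * (if N = \<mu> then fps_nth (comb m V (Cs k) j) (\<nu> k) else 0))"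
      unfolding D'_def comb_diff_sum fps_sub_nth fps_sum_nth by (simp add: fps_of_poly_monom mult.assoc)
    then show ?thesis
      using span order_comb(3)[OF unit_comb_const_coeff[OF _ D(1)]] i D(2) \<open>j \<in> A\<close> \<open>N \<le> \<mu>\<close>
      by (cases "N = \<mu>") (auto simp: \<mu>_def)
  qed
  then have "Suc \<mu> \<le> order_comb D'"
    using i \<open>D' \<in> _\<close> by (intro order_comb_geI unit_comb_const_coeff) auto
  moreover have "order_comb D' \<le> \<mu>"
    unfolding \<mu>_def using i \<open>D' \<in> _\<close> by (intro max_order(1)) auto
  ultimately show False by simp
qed

lemma greedy_leading_coeffs_indep:
  assumes inv: "greedy_inv r \<sigma> Cs \<nu>" and i: "i \<in> {1..m} - \<sigma> ` {1..r}"
    and D: "D \<in> unit_combs m (\<sigma> ` {1..r}) i" "order_comb D = max_order (\<sigma> ` {1..r}) i"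
  shows "cindep {1..Suc r} A (\<lambda>k j. fps_nth (comb m V ((Cs(Suc r := D)) k) j)
                                             ((\<nu>(Suc r := max_order (\<sigma> ` {1..r}) i)) k))"
  unfolding cindep_def
proof (intro allI impI)
  define \<mu> where "\<mu> = max_order (\<sigma> ` {1..r}) i"
  define \<omega> where "\<omega> = (\<lambda>k j. fps_nth (comb m V (Cs k) j) (\<nu> k))"
  fix a :: "nat \<Rightarrow> complex"
  assume "\<forall>j\<in>A. (\<Sum>k\<in>{1..Suc r}. a k * fps_nth (comb m V ((Cs(Suc r := D)) k) j)
                                               ((\<nu>(Suc r := \<mu>)) k)) = 0"
  moreover have "{1..Suc r} = insert (Suc r) {1..r}"
    by auto
  ultimately have sum: "a (Suc r) * fps_nth (comb m V D j) \<mu> + (\<Sum>k\<in>{1..r}. a k * \<omega> k j) = 0"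
    if "j \<in> A" for j
    using that by (simp add: \<omega>_def add.commute)
  have "a (Suc r) = 0"
  proof (rule ccontr)
    assume "a (Suc r) \<noteq> 0"
    then have "\<forall>j\<in>A. fps_nth (comb m V D j) \<mu> = (\<Sum>k\<in>{1..r}. - a k / a (Suc r) * \<omega> k j)"
      using sum by (auto simp: sum_divide_distrib[symmetric] sum_negf eq_neg_iff_add_eq_0 field_simps)
    then show False
      using greedy_leading_coeff_not_in_span[OF inv i D, where c="\<lambda>k. - a k / a (Suc r)"]
      unfolding \<mu>_def \<omega>_def by blast
  qed
  then have "\<forall>j\<in>A. (\<Sum>k\<in>{1..r}. a k * \<omega> k j) = 0"
    using sum by simp
  then have "\<forall>k\<in>{1..r}. a k = 0"
    using inv unfolding greedy_inv_def cindep_def \<omega>_def by blast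
  with \<open>a (Suc r) = 0\<close> show "\<forall>k\<in>{1..Suc r}. a k = 0"
    by (auto simp: le_Suc_eq)
qed

lemma greedy_inv_extend_combs:
  assumes inv: "greedy_inv r \<sigma> Cs \<nu>" and i: "i \<in> {1..m} - \<sigma> ` {1..r}"
    and D: "D \<in> unit_combs m (\<sigma> ` {1..r}) i" "order_comb D = \<mu>"
  shows "inj_on (\<sigma>(Suc r := i)) {1..Suc r}" "(\<sigma>(Suc r := i)) ` {1..Suc r} = insert i (\<sigma> ` {1..r})"
    and "\<And>k. k \<in> {1..Suc r} \<Longrightarrow> (Cs(Suc r := D)) k \<in> unit_combs m ((\<sigma>(Suc r := i)) ` {1..<k}) ((\<sigma>(Suc r := i)) k)"
    and "\<And>k. k \<in> {1..Suc r} \<Longrightarrow> (\<nu>(Suc r := \<mu>)) k = order_comb ((Cs(Suc r := D)) k)"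
proof -
  have inj: "inj_on \<sigma> {1..r}"
    and Cs: "\<And>k. k \<in> {1..r} \<Longrightarrow> Cs k \<in> unit_combs m (\<sigma> ` {1..<k}) (\<sigma> k) \<and> \<nu> k = order_comb (Cs k)"
    using inv unfolding greedy_inv_def by blast+
  have img: "(\<sigma>(Suc r := i)) ` {1..<k} = \<sigma> ` {1..<k}" if "k \<le> Suc r" for k
    using that by (intro image_cong) auto
  have "(\<sigma>(Suc r := i)) ` {1..r} = \<sigma> ` {1..r}" "{1..Suc r} = insert (Suc r) {1..r}"
    by (auto intro!: image_cong)
  then show "(\<sigma>(Suc r := i)) ` {1..Suc r} = insert i (\<sigma> ` {1..r})"
    by (simp only: image_insert fun_upd_same)
  have "inj_on (\<sigma>(Suc r := i)) {1..r}"
    using inj by (rule inj_on_cong[THEN iffD1, rotated]) auto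
  then show "inj_on (\<sigma>(Suc r := i)) {1..Suc r}"
    using \<open>_ ` {1..r} = _\<close> \<open>{1..Suc r} = _\<close> i by auto
  fix k assume k: "k \<in> {1..Suc r}"
  have "{1..<Suc r} = {1..r}" by auto
  then show "(Cs(Suc r := D)) k \<in> unit_combs m ((\<sigma>(Suc r := i)) ` {1..<k}) ((\<sigma>(Suc r := i)) k)"
    "(\<nu>(Suc r := \<mu>)) k = order_comb ((Cs(Suc r := D)) k)"
    using Cs[of k] D img[of k] k by (cases "k = Suc r"; simp)+
qed

text \<open>The greedy choice: extend by an unused index whose best reduction has the
  smallest order.\<close>
lemma greedy_inv_Suc:
  assumes inv: "greedy_inv r \<sigma> Cs \<nu>" and "r < m"
  shows "\<exists>\<sigma>' Cs' \<nu>'. greedy_inv (Suc r) \<sigma>' Cs' \<nu>'"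
proof -
  define S where "S = \<sigma> ` {1..r}"
  have inj: "inj_on \<sigma> {1..r}" and S_sub: "S \<subseteq> {1..m}"
    and mono: "\<And>k l. k \<in> {1..r} \<Longrightarrow> l \<in> {1..r} \<Longrightarrow> k \<le> l \<Longrightarrow> \<nu> k \<le> \<nu> l"
    and max: "\<And>i' k. i' \<in> {1..m} - S \<Longrightarrow> k \<in> {1..r} \<Longrightarrow> \<nu> k \<le> max_order S i'"
    using inv unfolding greedy_inv_def S_def by blast+
  have "card S = r"
    unfolding S_def using card_image[OF inj] by simp
  then have "{1..m} - S \<noteq> {}"
    using \<open>r < m\<close> card_mono[of S "{1..m}"] by (auto simp: S_def)
  then obtain i0 where "i0 \<in> {1..m} - S"
    by blast
  then obtain i where i: "i \<in> {1..m} - S" "\<And>i'. i' \<in> {1..m} - S \<Longrightarrow> max_order S i \<le> max_order S i'"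
    using ex_has_least_nat[of "\<lambda>i. i \<in> {1..m} - S" i0 "max_order S"] by blast
  obtain D where D: "D \<in> unit_combs m S i" "order_comb D = max_order S i"
    using max_order(2)[of i S] i(1) by blast
  note ext = greedy_inv_extend_combs[OF inv i(1)[unfolded S_def] D[unfolded S_def]]
  define \<nu>' where "\<nu>' = \<nu>(Suc r := max_order S i)"
  have "greedy_inv (Suc r) (\<sigma>(Suc r := i)) (Cs(Suc r := D)) \<nu>'"
    unfolding greedy_inv_def
  proof (intro conjI ballI impI)
    show "cindep {1..Suc r} A (\<lambda>k j. fps_nth (comb m V ((Cs(Suc r := D)) k) j) (\<nu>' k))"
      unfolding \<nu>'_def S_def
      by (rule greedy_leading_coeffs_indep[OF inv _ D[unfolded S_def]]) (use i(1) S_def in blast)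
  next
    fix k l assume "k \<in> {1..Suc r}" "l \<in> {1..Suc r}" "k \<le> l"
    then show "\<nu>' k \<le> \<nu>' l"
      using mono max[OF i(1)] by (cases "l = Suc r"; cases "k = Suc r") (auto simp: \<nu>'_def)
  next
    fix i' k assume i': "i' \<in> {1..m} - (\<sigma>(Suc r := i)) ` {1..Suc r}" and k: "k \<in> {1..Suc r}"
    then have "i' \<in> {1..m} - S" "i' \<in> {1..m}"
      using ext(2) by (auto simp: S_def)
    then have "\<nu>' k \<le> max_order S i'"
      using max i(2) k by (cases "k = Suc r") (auto simp: \<nu>'_def)
    also have "\<dots> \<le> max_order ((\<sigma>(Suc r := i)) ` {1..Suc r}) i'"
      using ext(2) \<open>i' \<in> {1..m}\<close> by (intro max_order_mono) (auto simp: S_def)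
    finally show "\<nu>' k \<le> max_order ((\<sigma>(Suc r := i)) ` {1..Suc r}) i'" .
  qed (use ext S_sub i(1) in \<open>auto simp: \<nu>'_def S_def\<close>)
  then show ?thesis by blast
qed

lemma greedy_inv_exists: "r \<le> m \<Longrightarrow> \<exists>\<sigma> Cs \<nu>. greedy_inv r \<sigma> Cs \<nu>"
proof (induction r)
  case 0
  have "greedy_inv 0 id (\<lambda>_ _. 0) (\<lambda>_. 0)"
    unfolding greedy_inv_def cindep_def by simp
  then show ?case by blast
next
  case (Suc r)
  then obtain \<sigma> Cs \<nu> where "greedy_inv r \<sigma> Cs \<nu>"
    by auto
  from greedy_inv_Suc[OF this] Suc.prems show ?case
    by simp
qed

lemma triangular_leading_terms:
  "\<exists>\<sigma>. \<sigma> permutes {1..m} \<and> (\<exists>c \<omega> \<nu>.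
     (\<forall>k\<in>{1..m}. (\<exists>j\<in>A. \<omega> k j \<noteq> 0) \<and>
        (\<forall>N<\<nu> k. \<forall>j\<in>A. fps_nth (V (\<sigma> k) j + (\<Sum>l\<in>{1..<k}. fps_of_poly (c k l) * V (\<sigma> l) j)) N = 0) \<and>
        (\<forall>j\<in>A. fps_nth (V (\<sigma> k) j + (\<Sum>l\<in>{1..<k}. fps_of_poly (c k l) * V (\<sigma> l) j)) (\<nu> k) = \<omega> k j)) \<and>
     cindep {1..m} A \<omega> \<and> (\<forall>k\<in>{1..m}. \<forall>l\<in>{1..m}. k \<le> l \<longrightarrow> \<nu> k \<le> \<nu> l) \<and> (\<forall>k\<in>{1..m}. \<nu> k \<le> B))"
proof -
  obtain \<sigma> Cs \<nu> where inv: "greedy_inv m \<sigma> Cs \<nu>"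
    using greedy_inv_exists by blast
  have inj: "inj_on \<sigma> {1..m}" and sub: "\<sigma> ` {1..m} \<subseteq> {1..m}"
    and Cs: "\<And>k. k \<in> {1..m} \<Longrightarrow> Cs k \<in> unit_combs m (\<sigma> ` {1..<k}) (\<sigma> k)"
    and \<nu>: "\<And>k. k \<in> {1..m} \<Longrightarrow> \<nu> k = order_comb (Cs k)"
    and indep: "cindep {1..m} A (\<lambda>k j. fps_nth (comb m V (Cs k) j) (\<nu> k))"
    and mono: "\<forall>k\<in>{1..m}. \<forall>l\<in>{1..m}. k \<le> l \<longrightarrow> \<nu> k \<le> \<nu> l"
    using inv unfolding greedy_inv_def by blast+
  define \<sigma>' where "\<sigma>' = (\<lambda>k. if k \<in> {1..m} then \<sigma> k else k)"
  have perm: "\<sigma>' permutes {1..m}"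
    unfolding \<sigma>'_def using inj sub by (rule permutes_restrict_inj[OF finite_atLeastAtMost])
  define c where "c = (\<lambda>k l. Cs k (\<sigma>' l))"
  have comb: "V (\<sigma>' k) j + (\<Sum>l\<in>{1..<k}. fps_of_poly (c k l) * V (\<sigma>' l) j) = comb m V (Cs k) j"
    if k: "k \<in> {1..m}" for k j
  proof (unfold c_def, rule comb_unit_comb[symmetric])
    show "inj_on \<sigma>' {1..k}" "\<sigma>' ` {1..k} \<subseteq> {1..m}"
      using k permutes_inj_on[OF perm] permutes_image[OF perm] by (auto intro: inj_on_subset)
    have "\<sigma>' ` {1..<k} = \<sigma> ` {1..<k}" "\<sigma>' k = \<sigma> k"
      using k by (auto simp: \<sigma>'_def intro!: image_cong)
    then show "Cs k \<in> unit_combs m (\<sigma>' ` {1..<k}) (\<sigma>' k)"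
      using Cs[OF k] by simp
  qed (use k in simp)
  have const: "\<exists>k'\<in>{1..m}. coeff (Cs k k') 0 \<noteq> 0" if "k \<in> {1..m}" for k
    using unit_comb_const_coeff[OF _ Cs[OF that]] sub that by blast
  define \<omega> where "\<omega> = (\<lambda>k j. fps_nth (comb m V (Cs k) j) (\<nu> k))"
  have lead: "(\<exists>j\<in>A. \<omega> k j \<noteq> 0) \<and>
        (\<forall>N<\<nu> k. \<forall>j\<in>A. fps_nth (V (\<sigma>' k) j + (\<Sum>l\<in>{1..<k}. fps_of_poly (c k l) * V (\<sigma>' l) j)) N = 0) \<and>
        (\<forall>j\<in>A. fps_nth (V (\<sigma>' k) j + (\<Sum>l\<in>{1..<k}. fps_of_poly (c k l) * V (\<sigma>' l) j)) (\<nu> k) = \<omega> k j)"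
    if k: "k \<in> {1..m}" for k
    unfolding comb[OF k] \<omega>_def \<nu>[OF k] using order_comb(2,3)[OF const[OF k]] by blast
  have bound: "\<nu> k \<le> B" if "k \<in> {1..m}" for k
    using order_comb(1)[OF const[OF that]] \<nu>[OF that] by simp
  show ?thesis
    using indep unfolding \<omega>_def[symmetric]
    by (intro exI[of _ \<sigma>'] conjI[OF perm] exI[of _ c] exI[of _ \<omega>] exI[of _ \<nu>] conjI ballI lead mono bound)
qed

end

section \<open>Analytic paths into the strata\<close>

lemma peval_cong: "(\<And>j. j \<in> {0..n} \<Longrightarrow> x j = y j) \<Longrightarrow> peval n g x = peval n g y"
  unfolding peval_def by (intro sum.cong prod.cong) auto

text \<open>The path \<rho>(s) = (tp s, zp s) is given on (-\<epsilon>, \<epsilon>) by the power series tc and zc i;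
  w i is the order of z_i(s) and lead collects the leading coefficients a_i.\<close>
locale analytic_path =
  fixes n nI :: nat and \<tau> :: complex and q :: "nat \<Rightarrow> complex"
    and tp :: "real \<Rightarrow> complex" and zp :: "real \<Rightarrow> nat \<Rightarrow> complex"
    and tc :: "nat \<Rightarrow> complex" and zc :: "nat \<Rightarrow> nat \<Rightarrow> complex" and \<epsilon> :: real and w :: "nat \<Rightarrow> nat"
  assumes nI: "1 \<le> nI" "nI < n"
    and q: "q \<in> Cstar {1..nI}"
    and \<epsilon>: "\<epsilon> > 0"
    and tp: "has_ps \<epsilon> tc tp" and zp: "\<forall>i\<in>{1..n}. has_ps \<epsilon> (zc i) (\<lambda>s. zp s i)"
    and tp_0: "tp 0 = \<tau>" and zp_0: "zp 0 = q"
    and zp_Cstar: "\<And>s. \<bar>s\<bar> < \<epsilon> \<Longrightarrow> s \<noteq> 0 \<Longrightarrow> zp s \<in> Cstar {1..n}"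
    and w: "\<forall>i\<in>{1..n}. w i = (LEAST m. zc i m \<noteq> 0)"
begin

definition path_fps :: "nat \<Rightarrow> complex fps" where
  "path_fps j = (if j = 0 then Abs_fps tc else Abs_fps (zc j))"

definition lead :: "nat \<Rightarrow> complex" where
  "lead j = (if j \<in> {1..n} then zc j (w j) else 0)"

lemma has_ps_path_fps: "\<forall>j\<in>{0..n}. has_ps \<epsilon> (fps_nth (path_fps j)) (\<lambda>s. ((zp s)(0 := tp s)) j)"
  using tp zp by (simp add: path_fps_def Abs_fps_inverse)

lemma path_coeff_0: "tc 0 = \<tau>" "\<And>i. i \<in> {1..n} \<Longrightarrow> zc i 0 = q i"
proof -
  have eq: "((zp 0)(0 := tp 0)) j = fps_nth (path_fps j) 0" if "j \<in> {0..n}" for j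
    using has_ps_path_fps \<epsilon> that unfolding has_ps_iff_eval_fps by (simp add: eval_fps_at_0)
  show "tc 0 = \<tau>"
    using eq[of 0] tp_0 by (simp add: path_fps_def)
  show "zc i 0 = q i" if "i \<in> {1..n}" for i
    using eq[of i] zp_0 that by (simp add: path_fps_def)
qed

lemma zc_nonzero:
  assumes "i \<in> {1..n}"
  shows "\<exists>m. zc i m \<noteq> 0"
proof (rule ccontr)
  assume "\<not> (\<exists>m. zc i m \<noteq> 0)"
  moreover have "\<forall>s. \<bar>s\<bar> < \<epsilon> \<longrightarrow> (\<lambda>m. zc i m * of_real s ^ m) sums zp s i"
    using zp assms unfolding has_ps_def by blast
  then have "(\<lambda>m. zc i m * of_real (\<epsilon> / 2) ^ m) sums zp (\<epsilon> / 2) i"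
    using \<epsilon> by (intro \<open>\<forall>s. _\<close>[rule_format]) simp
  ultimately have "zp (\<epsilon> / 2) i = 0"
    using sums_unique2[OF _ sums_zero] by simp
  moreover have "zp (\<epsilon> / 2) \<in> Cstar {1..n}"
    using zp_Cstar \<epsilon> by simp
  ultimately show False
    using assms unfolding Cstar_def by blast
qed

lemma path_fps_nth_less_w: "j \<in> {1..n} \<Longrightarrow> N < w j \<Longrightarrow> fps_nth (path_fps j) N = 0"
  using w not_less_Least[of N "\<lambda>m. zc j m \<noteq> 0"] by (auto simp: path_fps_def Abs_fps_inverse)

lemma lead_nonzero: "i \<in> {1..n} \<Longrightarrow> lead i \<noteq> 0"
  using w LeastI_ex[OF zc_nonzero] by (auto simp: lead_def)

lemma lead_Cstar: "lead \<in> Cstar {1..n}"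
  using lead_nonzero unfolding Cstar_def by (auto simp: lead_def)

lemma weight_0_on_I: "i \<in> {1..nI} \<Longrightarrow> w i = 0 \<and> lead i = q i"
proof -
  assume i: "i \<in> {1..nI}"
  then have "i \<in> {1..n}" "q i \<noteq> 0"
    using nI q unfolding Cstar_def by auto
  then show "w i = 0 \<and> lead i = q i"
    using w path_coeff_0(2) by (auto simp: lead_def Least_eq_0)
qed

lemma weight_pos_off_I: "i \<in> {nI+1..n} \<Longrightarrow> w i > 0"
proof -
  assume "i \<in> {nI+1..n}"
  then have "q i = 0" "i \<in> {1..n}"
    using q unfolding Cstar_def by auto
  then show "w i > 0"
    using lead_nonzero path_coeff_0(2) by (metis gr0I lead_def)
qed

lemma zero_weight_coords: "{i\<in>{1..n}. w i = 0} = {1..nI}"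
  using weight_0_on_I weight_pos_off_I nI by (force simp: not_less_eq_eq)

lemma path_fps_peval:
  assumes "finite (supp g)" "\<forall>\<alpha>\<in>supp g. K \<le> wdeg n w \<alpha>"
  shows "N < K \<Longrightarrow> fps_nth (fps_peval n path_fps g) N = 0"
    and "fps_nth (fps_peval n path_fps g) K = peval n (slice (whom_part n w g K) \<tau>) lead"
proof -
  have "\<forall>j\<in>{1..n}. \<forall>m<w j. fps_nth (path_fps j) m = 0"
    using path_fps_nth_less_w by blast
  note coeffs = fps_peval_nth_le_wdeg[OF assms(1) this assms(2)]
  then show "N < K \<Longrightarrow> fps_nth (fps_peval n path_fps g) N = 0"
    by blast
  have "peval n (whom_part n w g K) ((\<lambda>j. fps_nth (path_fps j) (w j))(0 := fps_nth (path_fps 0) 0)) =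
        peval n (whom_part n w g K) (lead(0 := \<tau>))"
    using path_coeff_0(1) by (intro peval_cong) (auto simp: path_fps_def lead_def)
  moreover have "finite (supp (whom_part n w g K))"
    using assms(1) by (rule finite_subset[rotated]) (auto simp: supp_def whom_part_def)
  ultimately show "fps_nth (fps_peval n path_fps g) K = peval n (slice (whom_part n w g K) \<tau>) lead"
    using coeffs(2) by (simp add: peval_slice)
qed

end

text \<open>f 1, ..., f p are the f^k with k in L', and L is their common value d of d(w; f^k_t).\<close>
locale newton_path = analytic_path +
  fixes p :: nat and f :: "nat \<Rightarrow> cpoly" and L :: nat and R :: real
  assumes p: "1 \<le> p"
    and finite_supp: "\<And>k. k \<in> {1..p} \<Longrightarrow> finite (supp (f k))"
    and wdeg_ge: "\<And>k \<alpha>. k \<in> {1..p} \<Longrightarrow> \<alpha> \<in> supp (f k) \<Longrightarrow> L \<le> wdeg n w \<alpha>"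
    and dW_eq: "\<And>k. k \<in> {1..p} \<Longrightarrow> dW n w (slice (f k) \<tau>) = real L"
    and vanishes_on_path: "\<And>k s. k \<in> {1..p} \<Longrightarrow> \<bar>s\<bar> < \<epsilon> \<Longrightarrow> peval n (f k) ((zp s)(0 := tp s)) = 0"
    and coord_subspace: "\<And>k. k \<in> {1..p} \<Longrightarrow> {1..nI} \<in> Vset n (slice (f k) \<tau>)"
    and tame: "tame_radius n {1..p} (\<lambda>k. slice (f k) \<tau>) R"
    and q_small: "(\<Sum>i\<in>{1..nI}. (cmod (q i))\<^sup>2) < R"
begin

lemma face_vanishes:
  assumes k: "k \<in> {1..p}"
  shows "peval n (facef n w (slice (f k) \<tau>)) lead = 0"
proof -
  have "fps_peval n path_fps (f k) = 0"
    using has_ps_fps_peval[OF has_ps_path_fps] \<epsilon> vanishes_on_path[OF k]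
    by (rule has_ps_zero_imp_fps_zero)
  then show ?thesis
    using path_fps_peval(2)[OF finite_supp[OF k]] wdeg_ge[OF k]
    by (simp add: facef_slice_eq_whom_part[OF finite_supp[OF k] dW_eq[OF k]])
qed

definition deriv_fps :: "nat \<Rightarrow> nat \<Rightarrow> complex fps" where
  "deriv_fps k j = fps_peval n path_fps (pderivv j (f k))"

definition face_grad :: "nat \<Rightarrow> nat \<Rightarrow> complex" where
  "face_grad k i = peval n (pderivv i (facef n w (slice (f k) \<tau>))) lead"

lemma has_ps_deriv_fps:
  "has_ps \<epsilon> (fps_nth (deriv_fps k j)) (\<lambda>s. peval n (pderivv j (f k)) ((zp s)(0 := tp s)))"
  unfolding deriv_fps_def by (rule has_ps_fps_peval[OF has_ps_path_fps])

lemma face_grad_eq: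
  assumes k: "k \<in> {1..p}" and i: "i \<in> {1..n}"
  shows "face_grad k i = (if w i \<le> L then peval n (slice (whom_part n w (pderivv i (f k)) (L - w i)) \<tau>) lead else 0)"
proof -
  have "i \<noteq> 0" "slice (\<lambda>_. 0) \<tau> = (\<lambda>_. 0)"
    using i by (auto simp: slice_def)
  then show ?thesis
    unfolding face_grad_def facef_slice_eq_whom_part[OF finite_supp[OF k] dW_eq[OF k]]
    by (simp add: slice_pderivv[symmetric] pderivv_whom_part[OF i])
qed

text \<open>Differentiating in z_i lowers the weighted degree by w i, so the i-th component
  of the gradient along the path vanishes to order L - w i, with the gradient of the
  face function at the leading coefficients as leading term.\<close>
lemma deriv_fps_nth:
  assumes k: "k \<in> {1..p}" and i: "i \<in> {1..n}" and wi: "w i \<le> L"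
  shows "N < L - w i \<Longrightarrow> fps_nth (deriv_fps k i) N = 0"
    and "fps_nth (deriv_fps k i) (L - w i) = face_grad k i"
proof -
  have "\<forall>\<alpha>\<in>supp (pderivv i (f k)). L - w i \<le> wdeg n w \<alpha>"
    using wdeg_ge[OF k] wdeg_upd_Suc[OF i, of w] by (fastforce simp: supp_pderivv)
  note coeffs = path_fps_peval[OF finite_supp_pderivv[OF finite_supp[OF k]] this]
  show "N < L - w i \<Longrightarrow> fps_nth (deriv_fps k i) N = 0"
    unfolding deriv_fps_def by (rule coeffs(1))
  show "fps_nth (deriv_fps k i) (L - w i) = face_grad k i"
    unfolding deriv_fps_def face_grad_eq[OF k i] using wi coeffs(2) by simp
qed

lemma face_grad_indep: "cindep {1..p} ({1..n} - {1..nI}) face_grad"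
  unfolding face_grad_def
proof (rule tame_radiusD[OF tame _ coord_subspace _ zero_weight_coords _ q_small lead_Cstar])
  show "\<exists>i\<in>{1..n}. w i \<noteq> 0"
    using weight_pos_off_I[of n] nI by auto
  show "q i \<noteq> 0" if "i \<in> {1..nI}" for i
    using q that unfolding Cstar_def by auto
qed (use nI weight_0_on_I face_vanishes in auto)

lemma comb_deriv_fps_nonzero:
  assumes C: "\<exists>k\<in>{1..p}. coeff (C k) 0 \<noteq> 0"
  shows "\<exists>i\<in>{nI+1..n}. w i \<le> L \<and> fps_nth (comb p deriv_fps C i) (L - w i) \<noteq> 0"
proof -
  define e where "e = (\<lambda>k. coeff (C k) 0)"
  have "\<exists>k\<in>{1..p}. e k \<noteq> 0"
    using C by (simp add: e_def)
  then have "\<not> (\<forall>i\<in>{1..n} - {1..nI}. (\<Sum>k\<in>{1..p}. e k * face_grad k i) = 0)"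
    using face_grad_indep unfolding cindep_def by blast
  then obtain i where i: "i \<in> {1..n} - {1..nI}" "(\<Sum>k\<in>{1..p}. e k * face_grad k i) \<noteq> 0"
    by blast
  then have "i \<in> {1..n}" "i \<in> {nI+1..n}"
    by auto
  have "w i \<le> L"
  proof (rule ccontr)
    assume "\<not> w i \<le> L"
    then have "face_grad k i = 0" if "k \<in> {1..p}" for k
      using face_grad_eq[OF that \<open>i \<in> {1..n}\<close>] by simp
    with i(2) show False by simp
  qed
  have "fps_nth (comb p deriv_fps C i) (L - w i) = (\<Sum>k\<in>{1..p}. e k * face_grad k i)"
    unfolding comb_def fps_sum_nth
  proof (intro sum.cong refl)
    fix k assume k: "k \<in> {1..p}"
    then show "fps_nth (fps_of_poly (C k) * deriv_fps k i) (L - w i) = e k * face_grad k i"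
      using deriv_fps_nth[OF k \<open>i \<in> {1..n}\<close> \<open>w i \<le> L\<close>] by (simp add: fps_mult_nth_of_low e_def)
  qed
  with i(2) \<open>i \<in> {nI+1..n}\<close> \<open>w i \<le> L\<close> show ?thesis
    by auto
qed

lemma min_weight_le: "Min (w ` {nI+1..n}) \<le> L"
proof -
  have "\<exists>k\<in>{1..p}. coeff ((\<lambda>_. 1) k) 0 \<noteq> 0"
    using p by auto
  from comb_deriv_fps_nonzero[OF this] obtain i where "i \<in> {nI+1..n}" "w i \<le> L"
    by blast
  then show ?thesis
    by (meson Min_le finite_atLeastAtMost finite_imageI image_eqI le_trans)
qed

lemma comb_deriv_fps_order_bound:
  assumes "\<exists>k\<in>{1..p}. coeff (C k) 0 \<noteq> 0"
  shows "\<exists>N\<le>L - Min (w ` {nI+1..n}). \<exists>j\<in>{0..n}. fps_nth (comb p deriv_fps C j) N \<noteq> 0"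
proof -
  obtain i where i: "i \<in> {nI+1..n}" "w i \<le> L" "fps_nth (comb p deriv_fps C i) (L - w i) \<noteq> 0"
    using comb_deriv_fps_nonzero[OF assms] by blast
  moreover have "Min (w ` {nI+1..n}) \<le> w i"
    using i(1) by (intro Min_le) auto
  then have "L - w i \<le> L - Min (w ` {nI+1..n})"
    by (rule diff_le_mono2)
  moreover have "i \<in> {0..n}"
    using i(1) by simp
  ultimately show ?thesis
    using i(3) by blast
qed

theorem leading_covectors:
  "\<exists>\<sigma>. \<sigma> permutes {1..p} \<and>
     (\<exists>(c::nat \<Rightarrow> nat \<Rightarrow> complex poly) (\<omega>::nat \<Rightarrow> nat \<Rightarrow> complex) (\<nu>::nat \<Rightarrow> nat).
        (\<forall>k\<in>{1..p}.
           (\<exists>j\<in>{0..n}. \<omega> k j \<noteq> 0) \<and>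
           (\<exists>\<epsilon>''>0. \<exists>b::nat \<Rightarrow> nat \<Rightarrow> complex.
              (\<forall>j\<in>{0..n}. has_ps \<epsilon>'' (\<lambda>m. b m j)
                 (\<lambda>s. peval n (pderivv j (f (\<sigma> k))) ((zp s)(0 := tp s)) +
                      (\<Sum>l\<in>{1..<k}. poly (c k l) (complex_of_real s) *
                          peval n (pderivv j (f (\<sigma> l))) ((zp s)(0 := tp s))))) \<and>
              (\<forall>m<\<nu> k. \<forall>j\<in>{0..n}. b m j = 0) \<and>
              (\<forall>j\<in>{0..n}. b (\<nu> k) j = \<omega> k j))) \<and>
        cindep {1..p} {0..n} \<omega> \<and>
        (\<forall>k\<in>{1..p}. \<forall>l\<in>{1..p}. k \<le> l \<longrightarrow> \<nu> k \<le> \<nu> l) \<and>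
        (\<forall>k\<in>{1..p}. real (\<nu> k) \<le> real L - real (Min (w ` {nI+1..n}))))"
proof -
  obtain \<sigma> c \<omega> \<nu> where \<sigma>: "\<sigma> permutes {1..p}"
    and lead: "\<forall>k\<in>{1..p}. (\<exists>j\<in>{0..n}. \<omega> k j \<noteq> 0) \<and>
        (\<forall>N<\<nu> k. \<forall>j\<in>{0..n}. fps_nth (deriv_fps (\<sigma> k) j + (\<Sum>l\<in>{1..<k}. fps_of_poly (c k l) * deriv_fps (\<sigma> l) j)) N = 0) \<and>
        (\<forall>j\<in>{0..n}. fps_nth (deriv_fps (\<sigma> k) j + (\<Sum>l\<in>{1..<k}. fps_of_poly (c k l) * deriv_fps (\<sigma> l) j)) (\<nu> k) = \<omega> k j)"
    and indep: "cindep {1..p} {0..n} \<omega>" and mono: "\<forall>k\<in>{1..p}. \<forall>l\<in>{1..p}. k \<le> l \<longrightarrow> \<nu> k \<le> \<nu> l"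
    and bound: "\<forall>k\<in>{1..p}. \<nu> k \<le> L - Min (w ` {nI+1..n})"
    using triangular_leading_terms[OF comb_deriv_fps_order_bound] by blast
  have "has_ps \<epsilon> (fps_nth (deriv_fps (\<sigma> k) j + (\<Sum>l\<in>{1..<k}. fps_of_poly (c k l) * deriv_fps (\<sigma> l) j)))
      (\<lambda>s. peval n (pderivv j (f (\<sigma> k))) ((zp s)(0 := tp s)) +
           (\<Sum>l\<in>{1..<k}. poly (c k l) (complex_of_real s) * peval n (pderivv j (f (\<sigma> l))) ((zp s)(0 := tp s))))"
    (is "has_ps \<epsilon> (fps_nth (?E k j)) _") for k j
    by (intro has_ps_add has_ps_sum has_ps_mult has_ps_poly has_ps_deriv_fps)
  then have series: "(\<exists>j\<in>{0..n}. \<omega> k j \<noteq> 0) \<and> (\<exists>\<epsilon>''>0. \<exists>b::nat \<Rightarrow> nat \<Rightarrow> complex.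
      (\<forall>j\<in>{0..n}. has_ps \<epsilon>'' (\<lambda>m. b m j)
         (\<lambda>s. peval n (pderivv j (f (\<sigma> k))) ((zp s)(0 := tp s)) +
              (\<Sum>l\<in>{1..<k}. poly (c k l) (complex_of_real s) * peval n (pderivv j (f (\<sigma> l))) ((zp s)(0 := tp s))))) \<and>
      (\<forall>m<\<nu> k. \<forall>j\<in>{0..n}. b m j = 0) \<and> (\<forall>j\<in>{0..n}. b (\<nu> k) j = \<omega> k j))"
    if "k \<in> {1..p}" for k
  proof (intro conjI exI[of _ \<epsilon>] exI[of _ "\<lambda>N j. fps_nth (?E k j) N"])
    show "\<epsilon> > 0" by (rule \<epsilon>)
  qed (use lead that \<open>\<And>k j. has_ps \<epsilon> (fps_nth (?E k j)) _\<close> in blast)+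
  have real_bound: "real (\<nu> k) \<le> real L - real (Min (w ` {nI+1..n}))" if "k \<in> {1..p}" for k
  proof -
    have "real (\<nu> k) \<le> real (L - Min (w ` {nI+1..n}))"
      using bound that by simp
    also have "\<dots> = real L - real (Min (w ` {nI+1..n}))"
      using min_weight_le by (rule of_nat_diff)
    finally show ?thesis .
  qed
  show ?thesis
    by (rule exI[of _ \<sigma>], rule conjI[OF \<sigma>], rule exI[of _ c], rule exI[of _ \<omega>], rule exI[of _ \<nu>])
       (intro conjI ballI series indep mono real_bound)
qed

end

section \<open>Points of the strata of a Newton-admissible family\<close>

definition admissible_within :: "nat \<Rightarrow> nat \<Rightarrow> (nat \<Rightarrow> cpoly) \<Rightarrow> real \<Rightarrow> real \<Rightarrow> bool" where
  "admissible_within n k0 f R e \<longleftrightarrow> (\<forall>t t'. cmod t < e \<longrightarrow> cmod t' < e \<longrightarrow>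
     (\<forall>k\<in>{1..k0}. newton_boundary n (slice (f k) t) = newton_boundary n (slice (f k) t')) \<and>
     (\<forall>P. P \<noteq> {} \<longrightarrow> P \<subseteq> {1..k0} \<longrightarrow>
        nondeg n P (\<lambda>k. slice (f k) t) \<and> (\<exists>R'>R. tame_radius n P (\<lambda>k. slice (f k) t) R')))"

lemma newton_admissible_iff: "newton_admissible n k0 f \<longleftrightarrow> (\<exists>R>0. \<exists>e>0. admissible_within n k0 f R e)"
  unfolding newton_admissible_def admissible_within_def ..

lemma admissible_withinD:
  assumes "admissible_within n k0 f R e" "cmod t < e" "cmod t' < e"
  shows "k \<in> {1..k0} \<Longrightarrow> newton_boundary n (slice (f k) t) = newton_boundary n (slice (f k) t')"
    and "P \<noteq> {} \<Longrightarrow> P \<subseteq> {1..k0} \<Longrightarrow> nondeg n P (\<lambda>k. slice (f k) t)"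
    and "P \<noteq> {} \<Longrightarrow> P \<subseteq> {1..k0} \<Longrightarrow> \<exists>R'>R. tame_radius n P (\<lambda>k. slice (f k) t) R'"
  using assms unfolding admissible_within_def by blast+

text \<open>Since the Newton boundaries do not move, the common value d of d(w; f_t) near t = 0
  is also the value at t = \<tau>, and it is a weighted degree, hence a natural number.\<close>
lemma common_weighted_degree:
  assumes adm: "admissible_within n k0 f R e" and \<tau>: "cmod \<tau> < e"
    and P: "{1..p} \<subseteq> {1..k0}" "1 \<le> p" and fin: "\<And>k. k \<in> {1..p} \<Longrightarrow> finite (supp (f k))"
    and d: "\<exists>\<epsilon>'>0. \<forall>t. cmod t < \<epsilon>' \<longrightarrow> (\<forall>k\<in>{1..p}. dW n w (slice (f k) t) = d)"
  obtains L where "d = real L" "\<And>k. k \<in> {1..p} \<Longrightarrow> dW n w (slice (f k) \<tau>) = real L"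
    "\<And>k \<alpha>. k \<in> {1..p} \<Longrightarrow> \<alpha> \<in> supp (f k) \<Longrightarrow> L \<le> wdeg n w \<alpha>"
proof -
  have "cmod 0 < e"
    using \<tau> norm_ge_zero[of \<tau>] by (simp only: norm_zero)
  have ne: "supp (slice (f k) t) \<noteq> {}" if "cmod t < e" "k \<in> {1..p}" for t k
    using nondeg_supp_nonempty[OF admissible_withinD(2)[OF adm that(1) that(1), of "{k}"]] P that(2)
    by auto
  obtain \<epsilon>' where "\<epsilon>' > 0" and d: "\<And>t k. cmod t < \<epsilon>' \<Longrightarrow> k \<in> {1..p} \<Longrightarrow> dW n w (slice (f k) t) = d"
    using d by blast
  have "1 \<in> {1..p}"
    using P(2) by simp
  then obtain \<beta> where "dW n w (slice (f 1) 0) = real (wdeg n w \<beta>)"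
    using dW_eq_wdeg[OF finite_supp_slice[OF fin] ne[OF \<open>cmod 0 < e\<close>]] by metis
  then have "d = real (wdeg n w \<beta>)"
    using d[of 0 1] \<open>1 \<in> {1..p}\<close> \<open>\<epsilon>' > 0\<close> by simp
  moreover have "dW n w (slice (f k) \<tau>) = d" if k: "k \<in> {1..p}" for k
  proof -
    have "dW n w (slice (f k) \<tau>) = dW n w (slice (f k) 0)"
      using admissible_withinD(1)[OF adm \<tau> \<open>cmod 0 < e\<close>] ne[OF \<tau> k] ne[OF \<open>cmod 0 < e\<close> k] P k
      by (intro dW_eq_of_newton_boundary_eq finite_supp_slice fin) auto
    then show ?thesis
      using d[of 0 k] k \<open>\<epsilon>' > 0\<close> by simp
  qed
  moreover have "wdeg n w \<beta> \<le> wdeg n w \<alpha>" if "k \<in> {1..p}" "\<alpha> \<in> supp (f k)" for k \<alpha>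
    using d \<open>d = _\<close> that \<open>\<epsilon>' > 0\<close> by (intro wdeg_ge_of_dW_const[OF fin]) auto
  ultimately show ?thesis
    using that by auto
qed

lemma small_point_bounds:
  fixes \<tau> :: complex and q :: "nat \<Rightarrow> complex"
  assumes "(cmod \<tau>)\<^sup>2 + (\<Sum>i\<in>{1..n}. (cmod (q i))\<^sup>2) < min R (min (a\<^sup>2) (b\<^sup>2))" "a > 0" "b > 0" "nI \<le> n"
  shows "cmod \<tau> < a" "cmod \<tau> < b" "(\<Sum>i\<in>{1..nI}. (cmod (q i))\<^sup>2) < R"
proof -
  have "(\<Sum>i\<in>{1..nI}. (cmod (q i))\<^sup>2) \<le> (\<Sum>i\<in>{1..n}. (cmod (q i))\<^sup>2)"
    using assms(4) by (intro sum_mono2) auto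
  moreover have "0 \<le> (\<Sum>i\<in>{1..nI}. (cmod (q i))\<^sup>2)" "0 \<le> (cmod \<tau>)\<^sup>2"
    by (simp_all add: sum_nonneg)
  moreover have "(cmod \<tau>)\<^sup>2 + (\<Sum>i\<in>{1..n}. (cmod (q i))\<^sup>2) < R"
    "(cmod \<tau>)\<^sup>2 + (\<Sum>i\<in>{1..n}. (cmod (q i))\<^sup>2) < a\<^sup>2" "(cmod \<tau>)\<^sup>2 + (\<Sum>i\<in>{1..n}. (cmod (q i))\<^sup>2) < b\<^sup>2"
    using assms(1) by simp_all
  ultimately have "(cmod \<tau>)\<^sup>2 < a\<^sup>2" "(cmod \<tau>)\<^sup>2 < b\<^sup>2" "(\<Sum>i\<in>{1..nI}. (cmod (q i))\<^sup>2) < R"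
    by linarith+
  then show "cmod \<tau> < a" "cmod \<tau> < b" "(\<Sum>i\<in>{1..nI}. (cmod (q i))\<^sup>2) < R"
    using assms(2,3) by (auto intro: power_less_imp_less_base)
qed

lemma newton_path_at_stratum_point:
  fixes f :: "nat \<Rightarrow> cpoly" and d :: real
  assumes polys: "\<forall>k\<in>{1..k0}. is_poly n (f k)"
    and LK: "{1..kL} \<subseteq> K" "K \<subseteq> {1..k0}" and nI: "1 \<le> nI" "nI < n" and "kL' \<noteq> 0"
    and adm: "admissible_within n k0 f R \<epsilon>a" and "\<epsilon>a > 0"
    and Lp: "\<And>t. cmod t < \<epsilon>L \<Longrightarrow> {k\<in>{1..kL}. {1..nI} \<in> Vset n (slice (f k) t)} = {1..kL'}" and "\<epsilon>L > 0"
    and small: "(cmod \<tau>)\<^sup>2 + (\<Sum>i\<in>{1..n}. (cmod (q i))\<^sup>2) < min R (min (\<epsilon>a\<^sup>2) (\<epsilon>L\<^sup>2))"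
    and point: "(\<tau>, q) \<in> stratum n k0 f {1..nI} K"
    and path: "\<epsilon> > 0" "has_ps \<epsilon> tc tp" "\<forall>i\<in>{1..n}. has_ps \<epsilon> (zc i) (\<lambda>s. zp s i)" "tp 0 = \<tau>" "zp 0 = q"
      "\<forall>s. \<bar>s\<bar> < \<epsilon> \<and> s \<noteq> 0 \<longrightarrow> (tp s, zp s) \<in> stratum n k0 f {1..n} {1..kL}"
    and w: "\<forall>i\<in>{1..n}. w i = (LEAST m. zc i m \<noteq> 0)"
    and d: "\<exists>\<epsilon>'>0. \<forall>t. cmod t < \<epsilon>' \<longrightarrow> (\<forall>k\<in>{1..kL'}. dW n w (slice (f k) t) = d)"
  obtains L R' where "d = real L" "newton_path n nI \<tau> q tp zp tc zc \<epsilon> w kL' f L R'"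
proof -
  have kL': "1 \<le> kL'"
    using \<open>kL' \<noteq> 0\<close> by simp
  note \<tau> = small_point_bounds[OF small \<open>\<epsilon>a > 0\<close> \<open>\<epsilon>L > 0\<close> less_imp_le[OF nI(2)]]
  have "cmod 0 < \<epsilon>L"
    using \<open>\<epsilon>L > 0\<close> by simp
  from Lp[OF this] have "{1..kL'} \<subseteq> {1..kL}"
    by blast
  then have P: "{1..kL'} \<subseteq> K" "{1..kL'} \<subseteq> {1..k0}"
    using LK order_trans by blast+
  have fin: "finite (supp (f k))" if "k \<in> {1..kL'}" for k
    using polys P that unfolding is_poly_def by blast
  obtain L where L: "d = real L" "\<And>k. k \<in> {1..kL'} \<Longrightarrow> dW n w (slice (f k) \<tau>) = real L"
    "\<And>k \<alpha>. k \<in> {1..kL'} \<Longrightarrow> \<alpha> \<in> supp (f k) \<Longrightarrow> L \<le> wdeg n w \<alpha>"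
    using common_weighted_degree[OF adm \<tau>(1) P(2) kL' fin d] by blast
  obtain R' where "R' > R" "tame_radius n {1..kL'} (\<lambda>k. slice (f k) \<tau>) R'"
    using admissible_withinD(3)[OF adm \<tau>(1) \<tau>(1), of "{1..kL'}"] kL' P by auto
  have "newton_path n nI \<tau> q tp zp tc zc \<epsilon> w kL' f L R'"
  proof (unfold_locales)
    show "q \<in> Cstar {1..nI}"
      using point unfolding stratum_def by simp
    show "zp s \<in> Cstar {1..n}" if "\<bar>s\<bar> < \<epsilon>" "s \<noteq> 0" for s
      using path(6) that unfolding stratum_def by blast
    show "peval n (f k) ((zp s)(0 := tp s)) = 0" if "k \<in> {1..kL'}" "\<bar>s\<bar> < \<epsilon>" for k s
    proof (cases "s = 0")
      case True
      then show ?thesis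
        using point P that(1) path(4,5) unfolding stratum_def by auto
    next
      case False
      then show ?thesis
        using path(6) \<open>{1..kL'} \<subseteq> {1..kL}\<close> P that unfolding stratum_def by auto
    qed
  qed (use nI kL' path w fin L Lp[OF \<tau>(2)] \<tau>(3) \<open>R' > R\<close> \<open>tame_radius _ _ _ R'\<close> in auto)
  with L(1) show ?thesis
    using that by blast
qed

theorem lemma6p1:
  fixes n k0 nI kL kL' :: nat and f :: "nat \<Rightarrow> cpoly" and K :: "nat set"
  assumes polys: "\<forall>k\<in>{1..k0}. is_poly n (f k)"
    and nonconst: "\<forall>k\<in>{1..k0}. \<exists>\<alpha>\<in>supp (f k). \<alpha> \<noteq> (\<lambda>_. 0)"
    and vanish: "\<forall>k\<in>{1..k0}. \<forall>t. peval n (f k) ((\<lambda>_. 0)(0 := t)) = 0"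
    and k0: "k0 \<ge> 1"
    and adm: "newton_admissible n k0 f"
    and nI: "1 \<le> nI" "nI < n"
    and LK: "{1..kL} \<subseteq> K" "K \<subseteq> {1..k0}"
    and Lp: "\<exists>\<epsilon>>0. \<forall>t. cmod t < \<epsilon> \<longrightarrow>
               {k\<in>{1..kL}. {1..nI} \<in> Vset n (slice (f k) t)} = {1..kL'}"
  shows "\<exists>\<delta>>0. \<forall>(\<tau>::complex) (q::nat \<Rightarrow> complex) (tp::real \<Rightarrow> complex) (zp::real \<Rightarrow> nat \<Rightarrow> complex)
            (tc::nat \<Rightarrow> complex) (zc::nat \<Rightarrow> nat \<Rightarrow> complex) (\<epsilon>::real) (w::nat \<Rightarrow> nat) (d::real).
     ((cmod \<tau>)\<^sup>2 + (\<Sum>i\<in>{1..n}. (cmod (q i))\<^sup>2) < \<delta> \<and>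
      (\<tau>, q) \<in> stratum n k0 f {1..nI} K \<and>
      (\<tau>, q) \<in> closure (stratum n k0 f {1..n} {1..kL}) \<and>
      \<epsilon> > 0 \<and> has_ps \<epsilon> tc tp \<and> (\<forall>i\<in>{1..n}. has_ps \<epsilon> (zc i) (\<lambda>s. zp s i)) \<and>
      tp 0 = \<tau> \<and> zp 0 = q \<and>
      (\<forall>s. \<bar>s\<bar> < \<epsilon> \<and> s \<noteq> 0 \<longrightarrow> (tp s, zp s) \<in> stratum n k0 f {1..n} {1..kL}) \<and>
      (\<forall>i\<in>{1..n}. w i = (LEAST m. zc i m \<noteq> 0)) \<and>
      (\<exists>\<epsilon>'>0. \<forall>t. cmod t < \<epsilon>' \<longrightarrow> (\<forall>k\<in>{1..kL'}. dW n w (slice (f k) t) = d)))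
     \<longrightarrow>
     (\<exists>\<sigma>. \<sigma> permutes {1..kL'} \<and>
       (\<exists>(c::nat \<Rightarrow> nat \<Rightarrow> complex poly) (\<omega>::nat \<Rightarrow> nat \<Rightarrow> complex) (\<nu>::nat \<Rightarrow> nat).
          (\<forall>k\<in>{1..kL'}.
             (\<exists>j\<in>{0..n}. \<omega> k j \<noteq> 0) \<and>
             (\<exists>\<epsilon>''>0. \<exists>b::nat \<Rightarrow> nat \<Rightarrow> complex.
                (\<forall>j\<in>{0..n}. has_ps \<epsilon>'' (\<lambda>m. b m j)
                   (\<lambda>s. peval n (pderivv j (f (\<sigma> k))) ((zp s)(0 := tp s)) +
                        (\<Sum>l\<in>{1..<k}. poly (c k l) (complex_of_real s) *
                            peval n (pderivv j (f (\<sigma> l))) ((zp s)(0 := tp s))))) \<and>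
                (\<forall>m<\<nu> k. \<forall>j\<in>{0..n}. b m j = 0) \<and>
                (\<forall>j\<in>{0..n}. b (\<nu> k) j = \<omega> k j))) \<and>
          cindep {1..kL'} {0..n} \<omega> \<and>
          (\<forall>k\<in>{1..kL'}. \<forall>l\<in>{1..kL'}. k \<le> l \<longrightarrow> \<nu> k \<le> \<nu> l) \<and>
          (\<forall>k\<in>{1..kL'}. real (\<nu> k) \<le> d - real (Min (w ` {nI+1..n})))))"
proof -
  obtain R \<epsilon>a where "R > 0" "\<epsilon>a > 0" and adm: "admissible_within n k0 f R \<epsilon>a"
    using adm unfolding newton_admissible_iff by blast
  obtain \<epsilon>L where "\<epsilon>L > 0" and Lp: "\<And>t. cmod t < \<epsilon>L \<Longrightarrow> {k\<in>{1..kL}. {1..nI} \<in> Vset n (slice (f k) t)} = {1..kL'}"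
    using Lp by blast
  define \<delta> where "\<delta> = min R (min (\<epsilon>a\<^sup>2) (\<epsilon>L\<^sup>2))"
  show ?thesis
  proof (intro exI[of _ \<delta>] conjI allI impI, goal_cases)
    case 1
    show ?case using \<open>R > 0\<close> \<open>\<epsilon>a > 0\<close> \<open>\<epsilon>L > 0\<close> by (simp add: \<delta>_def)
  next
    case (2 \<tau> q tp zp tc zc \<epsilon> w d)
    show ?case
    proof (cases "kL' = 0")
      case True
      then show ?thesis
        by (intro exI[of _ id]) (simp add: permutes_id cindep_def)
    next
      case False
      obtain L R' where "d = real L" "newton_path n nI \<tau> q tp zp tc zc \<epsilon> w kL' f L R'"
        using 2 unfolding \<delta>_def
        by (elim conjE) (rule newton_path_at_stratum_point[OF polys LK nI False adm \<open>\<epsilon>a > 0\<close> Lp \<open>\<epsilon>L > 0\<close>];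
            assumption)
      from newton_path.leading_covectors[OF this(2)] show ?thesis
        unfolding \<open>d = real L\<close> .
    qed
  qed
qed

end
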